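(* For $n\ge2$, the group $PL_n=\ker(\psi_P)$ is generated by the elements $$\lambda_{ij}^{(0)}=\lambda_{ij},\quad \lambda_{ij}^{(i)}=\lambda_{ij}^{\gamma_i},\quad \lambda_{ij}^{(j)}=\lambda_{ij}^{\gamma_j},\quad \lambda_{ij}^{(ij)}=\lambda_{ij}^{\gamma_i\gamma_j},\qquad 1\le i<j\le n.$$
   Context: For $n\ge 2$, the twisted virtual braid group $TVB_n$ is the group with generators $\sigma_1,\dots,\sigma_{n-1}$, $\rho_1,\dots,\rho_{n-1}$, $\gamma_1,\dots,\gamma_n$ and defining relations: $\sigma_i\sigma_{i+1}\sigma_i=\sigma_{i+1}\sigma_i\sigma_{i+1}$ ($1\le i\le n-2$); $\sigma_i\sigma_j=\sigma_j\sigma_i$ ($|i-j|\ge 2$); $\rho_i^2=1$; $\rho_i\rho_j=\rho_j\rho_i$ ($|i-j|\ge2$); $\rho_i\rho_{i+1}\rho_i=\rho_{i+1}\rho_i\rho_{i+1}$ ($1\le i\le n-2$); $\sigma_i\rho_j=\rho_j\sigma_i$ ($|i-j|\ge 2$); $\rho_i\rho_{i+1}\sigma_i=\sigma_{i+1}\rho_i\rho_{i+1}$ ($1\le i\le n-2$); $\gamma_i^2=1$ and $\gamma_i\gamma_j=\gamma_j\gamma_i$ (all $i,j$); $\gamma_j\rho_i=\rho_i\gamma_j$ and $\gamma_j\sigma_i=\sigma_i\gamma_j$ for $j\notin\{i,i+1\}$; $\rho_i\gamma_i=\gamma_{i+1}\rho_i$ ($1\le i\le n-1$); $\rho_i\sigma_i\rho_i=\gamma_{i+1}\gamma_i\sigma_i\gamma_i\gamma_{i+1}$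 ($1\le i\le n-1$). $TVP_n$ is the kernel of $\varphi_P:TVB_n\to S_n$, $\sigma_i,\rho_i\mapsto(i,i+1)$, $\gamma_j\mapsto e$. In $TVB_n$ define $\lambda_{i,i+1}=\rho_i\sigma_i^{-1}$, $\lambda_{i+1,i}=\rho_i\lambda_{i,i+1}\rho_i$ ($1\le i\le n-1$), and for $1\le i<j-1\le n-1$: $\lambda_{ij}=\rho_{j-1}\cdots\rho_{i+1}\lambda_{i,i+1}\rho_{i+1}\cdots\rho_{j-1}$, $\lambda_{ji}=\rho_{j-1}\cdots\rho_{i+1}\lambda_{i+1,i}\rho_{i+1}\cdots\rho_{j-1}$. $A_n=\langle\gamma_1,\dots,\gamma_n\rangle$, and $\psi_P:TVP_n\to A_n$ is the homomorphism with $\lambda_{kl}\mapsto e$, $\gamma_j\mapsto\gamma_j$; $PL_n=\ker\psi_P$. Conjugation notation: $a^b=b^{-1}ab$. *)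

theory Defs
  imports "HOL-Algebra.Algebra" "HOL-Combinatorics.Transposition"
begin

text \<open>Generators: S i = sigma_i, R i = rho_i, G j = gamma_j (1-based indices).\<close>
datatype tgen = S nat | R nat | G nat

text \<open>A letter is a generator together with a flag: False = the generator, True = its inverse.\<close>
type_synonym tletter = "tgen \<times> bool"
type_synonym tword = "tletter list"

definition letter_inv :: "tletter \<Rightarrow> tletter" where
  "letter_inv x = (fst x, \<not> snd x)"

fun valid_gen :: "nat \<Rightarrow> tgen \<Rightarrow> bool" where
  "valid_gen n (S i) = (1 \<le> i \<and> i \<le> n - 1)"
| "valid_gen n (R i) = (1 \<le> i \<and> i \<le> n - 1)"
| "valid_gen n (G j) = (1 \<le> j \<and> j \<le> n)"

definition valid_word :: "nat \<Rightarrow> tword \<Rightarrow> bool" where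
  "valid_word n w = (\<forall>x \<in> set w. valid_gen n (fst x))"

abbreviation sg :: "nat \<Rightarrow> tletter" where "sg i \<equiv> (S i, False)"
abbreviation sgi :: "nat \<Rightarrow> tletter" where "sgi i \<equiv> (S i, True)"
abbreviation rh :: "nat \<Rightarrow> tletter" where "rh i \<equiv> (R i, False)"
abbreviation gm :: "nat \<Rightarrow> tletter" where "gm i \<equiv> (G i, False)"

definition tvb_rels :: "nat \<Rightarrow> (tword \<times> tword) set" where
  "tvb_rels n =
     {([sg i, sg (i+1), sg i], [sg (i+1), sg i, sg (i+1)]) | i. 1 \<le> i \<and> i \<le> n - 2}
   \<union> {([sg i, sg j], [sg j, sg i]) | i j. 1 \<le> i \<and> i \<le> n - 1 \<and> 1 \<le> j \<and> j \<le> n - 1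
                                        \<and> (i + 2 \<le> j \<or> j + 2 \<le> i)}
   \<union> {([rh i, rh i], []) | i. 1 \<le> i \<and> i \<le> n - 1}
   \<union> {([rh i, rh j], [rh j, rh i]) | i j. 1 \<le> i \<and> i \<le> n - 1 \<and> 1 \<le> j \<and> j \<le> n - 1
                                        \<and> (i + 2 \<le> j \<or> j + 2 \<le> i)}
   \<union> {([rh i, rh (i+1), rh i], [rh (i+1), rh i, rh (i+1)]) | i. 1 \<le> i \<and> i \<le> n - 2}
   \<union> {([sg i, rh j], [rh j, sg i]) | i j. 1 \<le> i \<and> i \<le> n - 1 \<and> 1 \<le> j \<and> j \<le> n - 1
                                        \<and> (i + 2 \<le> j \<or> j + 2 \<le> i)}
   \<union> {([rh i, rh (i+1), sg i], [sg (i+1), rh i, rh (i+1)]) | i. 1 \<le> i \<and> i \<le> n - 2}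
   \<union> {([gm i, gm i], []) | i. 1 \<le> i \<and> i \<le> n}
   \<union> {([gm i, gm j], [gm j, gm i]) | i j. 1 \<le> i \<and> i \<le> n \<and> 1 \<le> j \<and> j \<le> n}
   \<union> {([gm j, rh i], [rh i, gm j]) | i j. 1 \<le> i \<and> i \<le> n - 1 \<and> 1 \<le> j \<and> j \<le> n
                                        \<and> j \<noteq> i \<and> j \<noteq> i + 1}
   \<union> {([gm j, sg i], [sg i, gm j]) | i j. 1 \<le> i \<and> i \<le> n - 1 \<and> 1 \<le> j \<and> j \<le> n
                                        \<and> j \<noteq> i \<and> j \<noteq> i + 1}
   \<union> {([rh i, gm i], [gm (i+1), rh i]) | i. 1 \<le> i \<and> i \<le> n - 1}
   \<union> {([rh i, sg i, rh i], [gm (i+1), gm i, sg i, gm i, gm (i+1)]) | i. 1 \<le> i \<and> i \<le> n - 1}"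

inductive tvb_eqv :: "nat \<Rightarrow> tword \<Rightarrow> tword \<Rightarrow> bool" for n where
  refl: "tvb_eqv n w w"
| sym: "tvb_eqv n u v \<Longrightarrow> tvb_eqv n v u"
| trans: "tvb_eqv n u v \<Longrightarrow> tvb_eqv n v w \<Longrightarrow> tvb_eqv n u w"
| cong: "tvb_eqv n u v \<Longrightarrow> tvb_eqv n (a @ u @ b) (a @ v @ b)"
| cancel: "tvb_eqv n [x, letter_inv x] []"
| rel: "(l, r) \<in> tvb_rels n \<Longrightarrow> tvb_eqv n l r"

definition tcls :: "nat \<Rightarrow> tword \<Rightarrow> tword set" where
  "tcls n w = {v. tvb_eqv n v w}"

definition TVB :: "nat \<Rightarrow> tword set monoid" where
  "TVB n = \<lparr> carrier = {tcls n w | w. valid_word n w},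
             monoid.mult = (\<lambda>A B. {w. \<exists>u \<in> A. \<exists>v \<in> B. tvb_eqv n w (u @ v)}),
             one = tcls n [] \<rparr>"

definition sigma :: "nat \<Rightarrow> nat \<Rightarrow> tword set" where "sigma n i = tcls n [sg i]"
definition rho :: "nat \<Rightarrow> nat \<Rightarrow> tword set" where "rho n i = tcls n [rh i]"
definition gamma :: "nat \<Rightarrow> nat \<Rightarrow> tword set" where "gamma n j = tcls n [gm j]"

fun perm_of_word :: "tword \<Rightarrow> nat \<Rightarrow> nat" where
  "perm_of_word [] = id"
| "perm_of_word ((S i, b) # w) = transpose i (i+1) \<circ> perm_of_word w"
| "perm_of_word ((R i, b) # w) = transpose i (i+1) \<circ> perm_of_word w"
| "perm_of_word ((G j, b) # w) = perm_of_word w"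

definition phiP :: "nat \<Rightarrow> tword set \<Rightarrow> nat \<Rightarrow> nat" where
  "phiP n A = perm_of_word (SOME w. w \<in> A \<and> valid_word n w)"

definition TVP :: "nat \<Rightarrow> tword set set" where
  "TVP n = kernel (TVB n) (sym_group n) (phiP n)"

definition lam_word :: "nat \<Rightarrow> nat \<Rightarrow> tword" where
  "lam_word k l =
    (if k < l then
       map rh (rev [k+1..<l]) @ [rh k, sgi k] @ map rh [k+1..<l]
     else
       map rh (rev [l+1..<k]) @ [rh l, rh l, sgi l, rh l] @ map rh [l+1..<k])"

definition lambda :: "nat \<Rightarrow> nat \<Rightarrow> nat \<Rightarrow> tword set" where
  "lambda n k l = tcls n (lam_word k l)"

definition An :: "nat \<Rightarrow> tword set set" where
  "An n = generate (TVB n) {gamma n j | j. 1 \<le> j \<and> j \<le> n}"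

definition tconj :: "nat \<Rightarrow> tword set \<Rightarrow> tword set \<Rightarrow> tword set" where
  "tconj n a b = inv\<^bsub>TVB n\<^esub> b \<otimes>\<^bsub>TVB n\<^esub> a \<otimes>\<^bsub>TVB n\<^esub> b"

definition is_psiP :: "nat \<Rightarrow> (tword set \<Rightarrow> tword set) \<Rightarrow> bool" where
  "is_psiP n \<psi> \<longleftrightarrow>
     \<psi> \<in> hom ((TVB n)\<lparr>carrier := TVP n\<rparr>) ((TVB n)\<lparr>carrier := An n\<rparr>)
     \<and> (\<forall>k l. 1 \<le> k \<and> k \<le> n \<and> 1 \<le> l \<and> l \<le> n \<and> k \<noteq> l \<longrightarrow> \<psi> (lambda n k l) = \<one>\<^bsub>TVB n\<^esub>)
     \<and> (\<forall>j. 1 \<le> j \<and> j \<le> n \<longrightarrow> \<psi> (gamma n j) = gamma n j)"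

definition PL_gens :: "nat \<Rightarrow> tword set set" where
  "PL_gens n = (\<Union>i \<in> {1..n}. \<Union>j \<in> {i<..n}.
     { lambda n i j,
       tconj n (lambda n i j) (gamma n i),
       tconj n (lambda n i j) (gamma n j),
       tconj n (lambda n i j) (gamma n i \<otimes>\<^bsub>TVB n\<^esub> gamma n j) })"

end

theory Submission
  imports Defs
begin

text \<open>Let \<open>PL\<close> be the subgroup generated by the given elements. Each generator is an
  \<open>A\<^sub>n\<close>-conjugate of some \<open>\<lambda>\<^sub>i\<^sub>j\<close>, so \<open>PL \<subseteq> TVP\<^sub>n\<close> and \<open>\<psi>\<^sub>P\<close> kills \<open>PL\<close>. Conversely, \<open>PL\<close> is
  normalised by every \<open>\<gamma>\<^sub>k\<close> and \<open>\<rho>\<^sub>m\<close> (conjugating \<open>\<lambda>\<^sub>i\<^sub>j\<close> by \<open>\<rho>\<^sub>m\<close> permutes the indices, or gives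
  the \<open>\<gamma>\<^sub>i\<gamma>\<^sub>j\<close>-conjugate when \<open>{i,j} = {m,m+1}\<close>), \<open>A\<^sub>n\<close> is normalised by the \<open>\<rho>\<^sub>m\<close>, and
  \<open>\<sigma>\<^sub>m = \<lambda>\<^bsub>m,m+1\<^esub>\<^sup>-\<^sup>1 \<rho>\<^sub>m\<close>; hence \<open>TVB\<^sub>n = PL \<cdot> A\<^sub>n \<cdot> \<langle>\<rho>\<^sub>1, \<dots>, \<rho>\<^bsub>n-1\<^esub>\<rangle>\<close>. For an element of
  \<open>TVP\<^sub>n\<close> the \<open>\<rho>\<close>-part has trivial permutation, so it is trivial because the \<open>\<rho>\<^sub>i\<close> satisfy the
  Coxeter relations of \<open>S\<^sub>n\<close>. Thus \<open>TVP\<^sub>n = PL \<cdot> A\<^sub>n\<close>, and since \<open>\<psi>\<^sub>P\<close> is the identity on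
  \<open>A\<^sub>n\<close>, its kernel is \<open>PL\<close>.\<close>

section \<open>Conjugation and generated subgroups\<close>

lemma (in group) conj_generate_closed:
  assumes a: "a \<in> carrier G" and SS: "SS \<subseteq> carrier G" and H: "subgroup H G"
    and conj: "\<And>h. h \<in> SS \<Longrightarrow> inv a \<otimes> h \<otimes> a \<in> H" and x: "x \<in> generate G SS"
  shows "inv a \<otimes> x \<otimes> a \<in> H"
  using x
proof induction
  case one
  show ?case using a subgroup.one_closed[OF H] by simp
next
  case (incl h)
  then show ?case by (rule conj)
next
  case (inv h)
  have "h \<in> carrier G" using inv SS by auto
  then have "inv a \<otimes> inv h \<otimes> a = inv (inv a \<otimes> h \<otimes> a)"
    using a by (simp add: inv_mult_group m_assoc)
  then show ?case using subgroup.m_inv_closed[OF H conj[OF inv]] by simp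
next
  case (eng x y)
  have "x \<in> carrier G" "y \<in> carrier G" using eng generate_in_carrier[OF SS] by auto
  moreover have "a \<otimes> (inv a \<otimes> z) = z" if "z \<in> carrier G" for z
    using a that by (simp add: m_assoc[symmetric])
  ultimately have "inv a \<otimes> (x \<otimes> y) \<otimes> a = (inv a \<otimes> x \<otimes> a) \<otimes> (inv a \<otimes> y \<otimes> a)"
    using a by (simp add: m_assoc)
  then show ?case using subgroup.m_closed[OF H eng.IH] by simp
qed

lemma (in group) generate_conj_closed:
  assumes T: "T \<subseteq> carrier G" and H: "subgroup H G"
    and conj: "\<And>t h. t \<in> T \<Longrightarrow> h \<in> H \<Longrightarrow> inv t \<otimes> h \<otimes> t \<in> H \<and> t \<otimes> h \<otimes> inv t \<in> H"
    and c: "c \<in> generate G T"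
  shows "\<forall>h\<in>H. inv c \<otimes> h \<otimes> c \<in> H"
  using c
proof induction
  case one
  show ?case using subgroup.subset[OF H] by auto
next
  case (incl t)
  then show ?case using conj by blast
next
  case (inv t)
  then show ?case using conj T by auto
next
  case (eng c d)
  have cd: "c \<in> carrier G" "d \<in> carrier G" using eng generate_in_carrier[OF T] by auto
  show ?case
  proof
    fix h assume h: "h \<in> H"
    then have "inv (c \<otimes> d) \<otimes> h \<otimes> (c \<otimes> d) = inv d \<otimes> (inv c \<otimes> h \<otimes> c) \<otimes> d"
      using cd subgroup.mem_carrier[OF H h] by (simp add: inv_mult_group m_assoc)
    then show "inv (c \<otimes> d) \<otimes> h \<otimes> (c \<otimes> d) \<in> H" using eng.IH h by simp
  qed
qed

lemma (in group) hom_subgroupsD: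
  assumes P: "subgroup P G" and A: "subgroup A G"
    and hom: "\<psi> \<in> hom (G\<lparr>carrier := P\<rparr>) (G\<lparr>carrier := A\<rparr>)"
  shows "group_hom (G\<lparr>carrier := P\<rparr>) (G\<lparr>carrier := A\<rparr>) \<psi>"
    and "\<And>x. x \<in> P \<Longrightarrow> \<psi> x \<in> A"
    and "\<And>x y. x \<in> P \<Longrightarrow> y \<in> P \<Longrightarrow> \<psi> (x \<otimes> y) = \<psi> x \<otimes> \<psi> y"
    and "\<And>x. x \<in> P \<Longrightarrow> \<psi> (inv x) = inv (\<psi> x)"
proof -
  show \<psi>: "group_hom (G\<lparr>carrier := P\<rparr>) (G\<lparr>carrier := A\<rparr>) \<psi>"
    using hom subgroup_imp_group[OF P] subgroup_imp_group[OF A] by (simp add: group_hom_def group_hom_axioms_def)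
  show \<psi>_in: "\<psi> x \<in> A" if "x \<in> P" for x
    using group_hom.hom_closed[OF \<psi>, of x] that by simp
  show "\<psi> (x \<otimes> y) = \<psi> x \<otimes> \<psi> y" if "x \<in> P" "y \<in> P" for x y
    using group_hom.hom_mult[OF \<psi>, of x y] that by simp
  show "\<psi> (inv x) = inv (\<psi> x)" if "x \<in> P" for x
    using group_hom.hom_inv[OF \<psi>, of x] that \<psi>_in[OF that] m_inv_consistent[OF P] m_inv_consistent[OF A]
    by simp
qed

lemma (in group) hom_fixes_generate:
  assumes P: "subgroup P G" and T: "T \<subseteq> P"
    and hom: "\<psi> \<in> hom (G\<lparr>carrier := P\<rparr>) (G\<lparr>carrier := generate G T\<rparr>)"
    and fix_T: "\<And>t. t \<in> T \<Longrightarrow> \<psi> t = t" and a: "a \<in> generate G T"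
  shows "\<psi> a = a"
proof -
  have A: "subgroup (generate G T) G" using generate_is_subgroup T subgroup.subset[OF P] by blast
  have AP: "generate G T \<subseteq> P" by (rule generate_subgroup_incl[OF T P])
  note \<psi> = hom_subgroupsD[OF P A hom]
  show ?thesis
    using a
  proof induction
    case one
    show ?case using group_hom.hom_one[OF \<psi>(1)] by simp
  next
    case (inv t)
    then show ?case using \<psi>(4) fix_T T by auto
  next
    case (eng a b)
    then show ?case using \<psi>(3)[of a b] AP by auto
  qed (rule fix_T)
qed

lemma (in group) kernel_retraction_eq_generate:
  assumes P: "subgroup P G" and T: "T \<subseteq> P"
    and hom: "\<psi> \<in> hom (G\<lparr>carrier := P\<rparr>) (G\<lparr>carrier := generate G T\<rparr>)"
    and fix_T: "\<And>t. t \<in> T \<Longrightarrow> \<psi> t = t"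
    and kill_SS: "\<And>s. s \<in> SS \<Longrightarrow> \<exists>c\<in>generate G T. \<exists>s0\<in>P. \<psi> s0 = \<one> \<and> s = inv c \<otimes> s0 \<otimes> c"
    and decomp: "\<And>x. x \<in> P \<Longrightarrow> \<exists>k\<in>generate G SS. \<exists>c\<in>generate G T. x = k \<otimes> c"
  shows "generate G SS = kernel (G\<lparr>carrier := P\<rparr>) (G\<lparr>carrier := generate G T\<rparr>) \<psi>"
proof -
  let ?A = "generate G T" and ?K = "kernel (G\<lparr>carrier := P\<rparr>) (G\<lparr>carrier := generate G T\<rparr>) \<psi>"
  have A: "subgroup ?A G" using generate_is_subgroup T subgroup.subset[OF P] by blast
  have AP: "?A \<subseteq> P" by (rule generate_subgroup_incl[OF T P])
  note \<psi> = hom_subgroupsD[OF P A hom]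
  have fix_A: "\<psi> a = a" if "a \<in> ?A" for a
    using hom_fixes_generate[OF P T hom] fix_T that by blast
  have "SS \<subseteq> ?K"
  proof
    fix s assume "s \<in> SS"
    then obtain c s0 where c: "c \<in> ?A" and s0: "s0 \<in> P" "\<psi> s0 = \<one>" and s: "s = inv c \<otimes> s0 \<otimes> c"
      using kill_SS by blast
    have cP: "c \<in> P" "inv c \<in> P" using c AP subgroup.m_inv_closed[OF P] by auto
    have "s \<in> P" using s s0 cP subgroup.m_closed[OF P] by simp
    moreover have "\<psi> s = inv c \<otimes> \<one> \<otimes> c"
      using s s0 cP \<psi>(3,4) fix_A[OF c] subgroup.m_closed[OF P] by simp
    ultimately show "s \<in> ?K" using c subgroup.mem_carrier[OF A] by (simp add: kernel_def)
  qed
  moreover have "subgroup ?K G" using incl_subgroup[OF P group_hom.subgroup_kernel[OF \<psi>(1)]] .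
  ultimately have sub: "generate G SS \<subseteq> ?K" by (rule generate_subgroup_incl)
  moreover have "x \<in> generate G SS" if x: "x \<in> ?K" for x
  proof -
    have xP: "x \<in> P" and \<psi>x: "\<psi> x = \<one>" using x by (auto simp: kernel_def)
    obtain k c where k: "k \<in> generate G SS" and c: "c \<in> ?A" and xkc: "x = k \<otimes> c"
      using decomp[OF xP] by blast
    have kP: "k \<in> P" and \<psi>k: "\<psi> k = \<one>" using sub k by (auto simp: kernel_def)
    have "\<one> = \<psi> k \<otimes> \<psi> c" using \<psi>x xkc \<psi>(3) kP c AP by auto
    then have "c = \<one>" using \<psi>k fix_A[OF c] c subgroup.mem_carrier[OF A] by simp
    then show ?thesis using xkc k kP subgroup.subset[OF P] by auto
  qed
  ultimately show ?thesis by blast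
qed

definition inv_word :: "tword \<Rightarrow> tword" where
  "inv_word w = rev (map letter_inv w)"

lemma letter_inv_inv [simp]: "letter_inv (letter_inv x) = x"
  by (simp add: letter_inv_def)

lemma inv_word_simps [simp]:
  "inv_word [] = []" "inv_word (x # w) = inv_word w @ [letter_inv x]"
  "inv_word (u @ v) = inv_word v @ inv_word u" "inv_word (inv_word w) = w"
  by (auto simp: inv_word_def rev_map comp_def)

lemma valid_word_simps [simp]:
  "valid_word n []"
  "valid_word n (x # w) \<longleftrightarrow> valid_gen n (fst x) \<and> valid_word n w"
  "valid_word n (u @ v) \<longleftrightarrow> valid_word n u \<and> valid_word n v"
  "valid_word n (rev w) \<longleftrightarrow> valid_word n w"
  "valid_word n (inv_word w) \<longleftrightarrow> valid_word n w"
  by (auto simp: valid_word_def inv_word_def letter_inv_def)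

lemma valid_rho_word [simp]: "valid_word n (map rh L) \<longleftrightarrow> (\<forall>k\<in>set L. 1 \<le> k \<and> k \<le> n - 1)"
  by (auto simp: valid_word_def)

lemmas tvb_eqv_trans [trans] = tvb_eqv.trans

context
  fixes n :: nat
begin

abbreviation eqv (infix "\<sim>\<sim>" 50) where "u \<sim>\<sim> v \<equiv> tvb_eqv n u v"

lemma eqv_refl: "u \<sim>\<sim> u"
  by (rule tvb_eqv.refl)

lemma eqv_sym: "u \<sim>\<sim> v \<Longrightarrow> v \<sim>\<sim> u"
  by (rule tvb_eqv.sym)

lemma eqv_ctx: "u \<sim>\<sim> v \<Longrightarrow> a @ u @ b \<sim>\<sim> a @ v @ b"
  by (rule tvb_eqv.cong)

lemma eqv_append_left: "u \<sim>\<sim> v \<Longrightarrow> a @ u \<sim>\<sim> a @ v"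
  using tvb_eqv.cong[of n u v a "[]"] by simp

lemma eqv_append_right: "u \<sim>\<sim> v \<Longrightarrow> u @ b \<sim>\<sim> v @ b"
  using tvb_eqv.cong[of n u v "[]" b] by simp

lemma eqv_append: "u \<sim>\<sim> u' \<Longrightarrow> v \<sim>\<sim> v' \<Longrightarrow> u @ v \<sim>\<sim> u' @ v'"
  using eqv_append_left eqv_append_right tvb_eqv.trans by blast

lemma eqv_drop_right: "u \<sim>\<sim> [] \<Longrightarrow> w @ u \<sim>\<sim> w"
  using eqv_append_left[of u "[]" w] by simp

lemma eqv_drop_left: "u \<sim>\<sim> [] \<Longrightarrow> u @ w \<sim>\<sim> w"
  using eqv_append_right[of u "[]" w] by simp

lemma letter_cancel: "[x, letter_inv x] \<sim>\<sim> []"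
  by (rule tvb_eqv.cancel)

lemma letter_cancel': "[letter_inv x, x] \<sim>\<sim> []"
  using tvb_eqv.cancel[of n "letter_inv x"] by simp

lemma inv_word_cancel: "w @ inv_word w \<sim>\<sim> []"
proof (induction w)
  case Nil
  show ?case by (simp add: eqv_refl)
next
  case (Cons x w)
  have "(x # w) @ inv_word (x # w) = [x] @ (w @ inv_word w) @ [letter_inv x]" by simp
  also have "\<dots> \<sim>\<sim> [x] @ [] @ [letter_inv x]" by (rule eqv_ctx[OF Cons])
  also have "\<dots> \<sim>\<sim> []" using letter_cancel by simp
  finally show ?case .
qed

lemma inv_word_cancel': "inv_word w @ w \<sim>\<sim> []"
  using inv_word_cancel[of "inv_word w"] by simp

lemma eqv_inv_word: "u \<sim>\<sim> v \<Longrightarrow> inv_word u \<sim>\<sim> inv_word v"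
proof -
  assume uv: "u \<sim>\<sim> v"
  have "inv_word u \<sim>\<sim> inv_word u @ (v @ inv_word v)"
    by (rule eqv_sym, rule eqv_drop_right, rule inv_word_cancel)
  also have "\<dots> \<sim>\<sim> inv_word u @ (u @ inv_word v)"
    by (rule eqv_append_left, rule eqv_append_right, rule eqv_sym, rule uv)
  also have "\<dots> = (inv_word u @ u) @ inv_word v" by simp
  also have "\<dots> \<sim>\<sim> [] @ inv_word v" by (rule eqv_append_right, rule inv_word_cancel')
  finally show ?thesis by simp
qed

lemma commute_letter_inv: "[x, y] \<sim>\<sim> [y, x] \<Longrightarrow> [letter_inv x, y] \<sim>\<sim> [y, letter_inv x]"
proof -
  assume xy: "[x, y] \<sim>\<sim> [y, x]"
  have "[letter_inv x, y] \<sim>\<sim> [letter_inv x, y] @ [x, letter_inv x]"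
    by (rule eqv_sym, rule eqv_drop_right, rule letter_cancel)
  also have "\<dots> = [letter_inv x] @ [y, x] @ [letter_inv x]" by simp
  also have "\<dots> \<sim>\<sim> [letter_inv x] @ [x, y] @ [letter_inv x]" by (rule eqv_ctx, rule eqv_sym, rule xy)
  also have "\<dots> = [letter_inv x, x] @ [y, letter_inv x]" by simp
  also have "\<dots> \<sim>\<sim> [] @ [y, letter_inv x]" by (rule eqv_append_right, rule letter_cancel')
  finally show ?thesis by simp
qed

lemma commute_word: "(\<And>y. y \<in> set w \<Longrightarrow> [x, y] \<sim>\<sim> [y, x]) \<Longrightarrow> [x] @ w \<sim>\<sim> w @ [x]"
proof (induction w)
  case Nil
  show ?case by (simp add: eqv_refl)
next
  case (Cons y w)
  have "[x] @ y # w = [x, y] @ w" by simp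
  also have "\<dots> \<sim>\<sim> [y, x] @ w" by (rule eqv_append_right) (use Cons in auto)
  also have "\<dots> = [y] @ [x] @ w" by simp
  also have "\<dots> \<sim>\<sim> [y] @ w @ [x]" by (rule eqv_append_left) (use Cons in auto)
  finally show ?case by simp
qed

lemma rho_sq: "1 \<le> i \<Longrightarrow> i \<le> n - 1 \<Longrightarrow> [rh i, rh i] \<sim>\<sim> []"
  by (rule tvb_eqv.rel) (auto simp: tvb_rels_def)

lemma rho_comm: "1 \<le> i \<Longrightarrow> i \<le> n - 1 \<Longrightarrow> 1 \<le> j \<Longrightarrow> j \<le> n - 1 \<Longrightarrow> i + 2 \<le> j \<or> j + 2 \<le> i
  \<Longrightarrow> [rh i, rh j] \<sim>\<sim> [rh j, rh i]"
  by (rule tvb_eqv.rel) (auto simp: tvb_rels_def)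

lemma rho_braid: "1 \<le> i \<Longrightarrow> i \<le> n - 2 \<Longrightarrow> [rh i, rh (i+1), rh i] \<sim>\<sim> [rh (i+1), rh i, rh (i+1)]"
  by (rule tvb_eqv.rel) (auto simp: tvb_rels_def)

lemma sigma_rho_comm: "1 \<le> i \<Longrightarrow> i \<le> n - 1 \<Longrightarrow> 1 \<le> j \<Longrightarrow> j \<le> n - 1 \<Longrightarrow> i + 2 \<le> j \<or> j + 2 \<le> i
  \<Longrightarrow> [sg i, rh j] \<sim>\<sim> [rh j, sg i]"
  by (rule tvb_eqv.rel) (auto simp: tvb_rels_def)

lemma rho_rho_sigma: "1 \<le> i \<Longrightarrow> i \<le> n - 2 \<Longrightarrow> [rh i, rh (i+1), sg i] \<sim>\<sim> [sg (i+1), rh i, rh (i+1)]"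
  by (rule tvb_eqv.rel) (auto simp: tvb_rels_def)

lemma gamma_sq: "1 \<le> i \<Longrightarrow> i \<le> n \<Longrightarrow> [gm i, gm i] \<sim>\<sim> []"
  by (rule tvb_eqv.rel) (auto simp: tvb_rels_def)

lemma gamma_comm: "1 \<le> i \<Longrightarrow> i \<le> n \<Longrightarrow> 1 \<le> j \<Longrightarrow> j \<le> n \<Longrightarrow> [gm i, gm j] \<sim>\<sim> [gm j, gm i]"
  by (rule tvb_eqv.rel) (auto simp: tvb_rels_def)

lemma gamma_rho_comm: "1 \<le> i \<Longrightarrow> i \<le> n - 1 \<Longrightarrow> 1 \<le> j \<Longrightarrow> j \<le> n \<Longrightarrow> j \<noteq> i \<Longrightarrow> j \<noteq> i + 1
  \<Longrightarrow> [gm j, rh i] \<sim>\<sim> [rh i, gm j]"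
  by (rule tvb_eqv.rel) (auto simp: tvb_rels_def)

lemma gamma_sigma_comm: "1 \<le> i \<Longrightarrow> i \<le> n - 1 \<Longrightarrow> 1 \<le> j \<Longrightarrow> j \<le> n \<Longrightarrow> j \<noteq> i \<Longrightarrow> j \<noteq> i + 1
  \<Longrightarrow> [gm j, sg i] \<sim>\<sim> [sg i, gm j]"
  by (rule tvb_eqv.rel) (auto simp: tvb_rels_def)

lemma rho_gamma: "1 \<le> i \<Longrightarrow> i \<le> n - 1 \<Longrightarrow> [rh i, gm i] \<sim>\<sim> [gm (i+1), rh i]"
  by (rule tvb_eqv.rel) (auto simp: tvb_rels_def)

lemma rho_sigma_rho: "1 \<le> i \<Longrightarrow> i \<le> n - 1
  \<Longrightarrow> [rh i, sg i, rh i] \<sim>\<sim> [gm (i+1), gm i, sg i, gm i, gm (i+1)]"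
  by (rule tvb_eqv.rel) (auto simp: tvb_rels_def)

lemma involution_inv_letter:
  assumes "[x, x] \<sim>\<sim> []"
  shows "[letter_inv x] \<sim>\<sim> [x]"
proof -
  have "[letter_inv x] \<sim>\<sim> [letter_inv x] @ [x, x]" by (rule eqv_sym, rule eqv_drop_right, fact)
  also have "\<dots> = [letter_inv x, x] @ [x]" by simp
  also have "\<dots> \<sim>\<sim> [] @ [x]" by (rule eqv_append_right, rule letter_cancel')
  finally show ?thesis by simp
qed

lemma rho_inv_letter: "1 \<le> i \<Longrightarrow> i \<le> n - 1 \<Longrightarrow> [(R i, True)] \<sim>\<sim> [rh i]"
  using involution_inv_letter[OF rho_sq] by (simp add: letter_inv_def)

lemma gamma_inv_letter: "1 \<le> i \<Longrightarrow> i \<le> n \<Longrightarrow> [(G i, True)] \<sim>\<sim> [gm i]"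
  using involution_inv_letter[OF gamma_sq] by (simp add: letter_inv_def)

text \<open>Since the \<open>\<rho>\<^sub>i\<close> and \<open>\<gamma>\<^sub>j\<close> are involutions, inverting a relation and then erasing the
  inversion marks on these letters yields a relation again.\<close>

fun unmark_involution :: "tletter \<Rightarrow> tletter" where
  "unmark_involution (R i, True) = rh i"
| "unmark_involution (G i, True) = gm i"
| "unmark_involution x = x"

lemma eqv_unmark_involutions: "valid_word n w \<Longrightarrow> w \<sim>\<sim> map unmark_involution w"
proof (induction w)
  case Nil
  show ?case by (simp add: eqv_refl)
next
  case (Cons x w)
  have "[x] \<sim>\<sim> [unmark_involution x]"
    using Cons.prems by (cases x rule: unmark_involution.cases) (auto intro: rho_inv_letter gamma_inv_letter eqv_refl)
  then have "[x] @ w \<sim>\<sim> [unmark_involution x] @ map unmark_involution w"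
    using Cons by (intro eqv_append) auto
  then show ?case by simp
qed

lemma eqv_inverted:
  assumes "u \<sim>\<sim> v" "valid_word n u" "valid_word n v"
  shows "map unmark_involution (inv_word u) \<sim>\<sim> map unmark_involution (inv_word v)"
proof -
  have "map unmark_involution (inv_word u) \<sim>\<sim> inv_word u"
    by (rule eqv_sym, rule eqv_unmark_involutions) (simp add: assms)
  also have "\<dots> \<sim>\<sim> inv_word v" by (rule eqv_inv_word, fact)
  also have "\<dots> \<sim>\<sim> map unmark_involution (inv_word v)"
    by (rule eqv_unmark_involutions) (simp add: assms)
  finally show ?thesis .
qed

lemma gamma_rho: "1 \<le> i \<Longrightarrow> i \<le> n - 1 \<Longrightarrow> 1 \<le> k \<Longrightarrow> k \<le> n
  \<Longrightarrow> [gm k, rh i] \<sim>\<sim> [rh i, gm (transpose i (i+1) k)]"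
proof -
  assume i: "1 \<le> i" "i \<le> n - 1" and k: "1 \<le> k" "k \<le> n"
  consider "k = i" | "k = i + 1" | "k \<noteq> i" "k \<noteq> i + 1" by blast
  then show ?thesis
  proof cases
    case 1
    have "[gm i, rh i] \<sim>\<sim> map unmark_involution (inv_word [rh i, gm i])" by (simp add: letter_inv_def eqv_refl)
    also have "\<dots> \<sim>\<sim> map unmark_involution (inv_word [gm (i+1), rh i])"
      by (rule eqv_inverted, rule rho_gamma) (use i in auto)
    finally show ?thesis using 1 by (simp add: letter_inv_def)
  next
    case 2
    then show ?thesis using eqv_sym[OF rho_gamma[OF i]] by simp
  next
    case 3
    then show ?thesis using gamma_rho_comm[OF i k] by simp
  qed
qed

lemma tcls_eq_iff: "tcls n u = tcls n v \<longleftrightarrow> u \<sim>\<sim> v"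
proof
  assume "tcls n u = tcls n v"
  moreover have "u \<in> tcls n u" by (simp add: tcls_def eqv_refl)
  ultimately show "u \<sim>\<sim> v" by (simp add: tcls_def)
next
  assume "u \<sim>\<sim> v"
  then show "tcls n u = tcls n v"
    by (auto simp: tcls_def intro: tvb_eqv.trans tvb_eqv.sym)
qed

lemma tcls_mult: "tcls n u \<otimes>\<^bsub>TVB n\<^esub> tcls n v = tcls n (u @ v)"
  by (auto simp: TVB_def tcls_def intro: tvb_eqv.trans eqv_append eqv_refl)

lemma TVB_one: "\<one>\<^bsub>TVB n\<^esub> = tcls n []"
  by (simp add: TVB_def)

lemma TVB_carrier: "carrier (TVB n) = {tcls n w | w. valid_word n w}"
  by (simp add: TVB_def)

lemma tcls_in_carrier: "valid_word n w \<Longrightarrow> tcls n w \<in> carrier (TVB n)"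
  by (auto simp: TVB_carrier)

lemma group_TVB: "group (TVB n)"
proof (rule groupI)
  fix x assume "x \<in> carrier (TVB n)"
  then obtain w where "x = tcls n w" "valid_word n w" by (auto simp: TVB_carrier)
  then show "\<exists>y\<in>carrier (TVB n). y \<otimes>\<^bsub>TVB n\<^esub> x = \<one>\<^bsub>TVB n\<^esub>"
    by (intro bexI[of _ "tcls n (inv_word w)"])
       (auto simp: tcls_in_carrier tcls_mult TVB_one tcls_eq_iff inv_word_cancel')
qed (auto simp: TVB_carrier tcls_mult TVB_one)

lemma inv_tcls: "valid_word n w \<Longrightarrow> inv\<^bsub>TVB n\<^esub> (tcls n w) = tcls n (inv_word w)"
  by (rule group.inv_equality[OF group_TVB])
     (auto simp: tcls_mult TVB_one tcls_eq_iff inv_word_cancel' tcls_in_carrier)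

lemma perm_of_word_append: "perm_of_word (u @ v) = perm_of_word u \<circ> perm_of_word v"
  by (induction u rule: perm_of_word.induct) auto

lemma perm_of_word_eqv: "u \<sim>\<sim> v \<Longrightarrow> perm_of_word u = perm_of_word v"
proof (induction rule: tvb_eqv.induct)
  case (cong u v a b)
  then show ?case by (simp add: perm_of_word_append)
next
  case (cancel x)
  obtain g b where "x = (g, b)" by (cases x)
  then show ?case by (cases g) (auto simp: letter_inv_def fun_eq_iff transpose_def)
next
  case (rel l r)
  then show ?case unfolding tvb_rels_def by (auto simp: fun_eq_iff transpose_def)
qed auto

lemma phiP_tcls: "valid_word n w \<Longrightarrow> phiP n (tcls n w) = perm_of_word w"
proof -
  assume w: "valid_word n w"
  let ?u = "SOME u. u \<in> tcls n w \<and> valid_word n u"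
  have "\<exists>u. u \<in> tcls n w \<and> valid_word n u" using w eqv_refl unfolding tcls_def by blast
  then have "?u \<in> tcls n w" by (rule someI2_ex) blast
  then have "?u \<sim>\<sim> w" by (simp add: tcls_def)
  then show ?thesis unfolding phiP_def by (rule perm_of_word_eqv)
qed

lemma TVP_iff: "x \<in> TVP n \<longleftrightarrow> (\<exists>w. x = tcls n w \<and> valid_word n w \<and> perm_of_word w = id)"
  by (auto simp: TVP_def kernel_def TVB_carrier phiP_tcls sym_group_def)

lemma tcls_in_TVP: "valid_word n w \<Longrightarrow> perm_of_word w = id \<Longrightarrow> tcls n w \<in> TVP n"
  using TVP_iff by blast

lemma perm_of_inv_word: "perm_of_word w = id \<Longrightarrow> perm_of_word (inv_word w) = id"
  using perm_of_word_eqv[OF inv_word_cancel[of w]] by (simp add: perm_of_word_append)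

lemma subgroup_TVP: "subgroup (TVP n) (TVB n)"
proof (rule subgroup.intro)
  fix x assume "x \<in> TVP n"
  then show "inv\<^bsub>TVB n\<^esub> x \<in> TVP n"
    by (auto simp: TVP_iff inv_tcls perm_of_inv_word)
qed (auto simp: TVP_iff TVB_carrier tcls_mult perm_of_word_append TVB_one)

section \<open>Words in the \<open>\<rho>\<^sub>i\<close>\<close>

lemma rho_word_cancel: "valid_word n (map rh L) \<Longrightarrow> map rh L @ map rh (rev L) \<sim>\<sim> []"
proof (induction L)
  case Nil
  show ?case by (simp add: eqv_refl)
next
  case (Cons x L)
  have "map rh (x # L) @ map rh (rev (x # L)) = [rh x] @ (map rh L @ map rh (rev L)) @ [rh x]" by simp
  also have "\<dots> \<sim>\<sim> [rh x] @ [] @ [rh x]" by (rule eqv_ctx) (use Cons in auto)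
  also have "\<dots> \<sim>\<sim> []" using rho_sq Cons.prems by simp
  finally show ?case .
qed

lemma rho_word_cancel': "valid_word n (map rh L) \<Longrightarrow> map rh (rev L) @ map rh L \<sim>\<sim> []"
  using rho_word_cancel[of "rev L"] by simp

lemma rho_commute_far:
  assumes "1 \<le> m" "m \<le> n - 1"
    and "\<And>x. x \<in> set L \<Longrightarrow> 1 \<le> x \<and> x \<le> n - 1 \<and> (m + 2 \<le> x \<or> x + 2 \<le> m)"
  shows "[rh m] @ map rh L \<sim>\<sim> map rh L @ [rh m]"
proof (rule commute_word)
  fix y assume "y \<in> set (map rh L)"
  then obtain x where x: "x \<in> set L" "y = rh x" by auto
  then show "[rh m, y] \<sim>\<sim> [y, rh m]" using assms(3)[OF x(1)] assms(1,2) by (auto intro: rho_comm)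
qed

lemma transpose_in_range:
  "1 \<le> i \<Longrightarrow> i \<le> n - 1 \<Longrightarrow> 1 \<le> k \<Longrightarrow> k \<le> n \<Longrightarrow>
   1 \<le> transpose i (i+1) k \<and> transpose i (i+1) k \<le> n"
  by (auto simp: transpose_def)

lemma perm_of_word_range:
  "valid_word n w \<Longrightarrow> 1 \<le> k \<Longrightarrow> k \<le> n \<Longrightarrow> 1 \<le> perm_of_word w k \<and> perm_of_word w k \<le> n"
  by (induction w rule: perm_of_word.induct) (auto simp del: One_nat_def dest: transpose_in_range)

lemma gamma_rho_word:
  "valid_word n (map rh L) \<Longrightarrow> 1 \<le> k \<Longrightarrow> k \<le> n
   \<Longrightarrow> [gm k] @ map rh L \<sim>\<sim> map rh L @ [gm (perm_of_word (map rh (rev L)) k)]"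
proof (induction L arbitrary: k)
  case Nil
  show ?case by (simp add: eqv_refl)
next
  case (Cons m L)
  let ?k' = "transpose m (m+1) k"
  have k': "1 \<le> ?k'" "?k' \<le> n" using Cons.prems by (auto simp: transpose_def)
  have "[gm k] @ map rh (m # L) = [gm k, rh m] @ map rh L" by simp
  also have "\<dots> \<sim>\<sim> [rh m, gm ?k'] @ map rh L"
    by (rule eqv_append_right, rule gamma_rho) (use Cons.prems in auto)
  also have "\<dots> = [rh m] @ [gm ?k'] @ map rh L" by simp
  also have "\<dots> \<sim>\<sim> [rh m] @ map rh L @ [gm (perm_of_word (map rh (rev L)) ?k')]"
    by (rule eqv_append_left, rule Cons.IH) (use Cons.prems k' in auto)
  finally show ?case by (simp add: perm_of_word_append)
qed

lemma rho_cycle_shift: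
  assumes "1 \<le> a" "a \<le> m" "m + 2 \<le> b" "b \<le> n"
  shows "[rh m] @ map rh (rev [a..<b]) \<sim>\<sim> map rh (rev [a..<b]) @ [rh (m+1)]"
proof -
  define A where "A = map rh (rev [m+2..<b])"
  define B where "B = map rh (rev [a..<m])"
  have split: "map rh (rev [a..<b]) = A @ [rh (m+1), rh m] @ B"
  proof -
    have "[a..<b] = [a..<m] @ [m..<b]" using upt_add_eq_append[of a m "b - m"] assms by simp
    moreover have "[m..<b] = [m, m+1] @ [m+2..<b]" using assms by (simp add: upt_conv_Cons)
    ultimately show ?thesis by (simp add: A_def B_def)
  qed
  have "[rh m] @ map rh (rev [a..<b]) = ([rh m] @ A) @ [rh (m+1), rh m] @ B" by (simp add: split)
  also have "\<dots> \<sim>\<sim> (A @ [rh m]) @ [rh (m+1), rh m] @ B"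
    by (rule eqv_append_right, unfold A_def, rule rho_commute_far) (use assms in auto)
  also have "\<dots> = A @ [rh m, rh (m+1), rh m] @ B" by simp
  also have "\<dots> \<sim>\<sim> A @ [rh (m+1), rh m, rh (m+1)] @ B"
    by (rule eqv_ctx, rule rho_braid) (use assms in auto)
  also have "\<dots> = (A @ [rh (m+1), rh m]) @ [rh (m+1)] @ B" by simp
  also have "\<dots> \<sim>\<sim> (A @ [rh (m+1), rh m]) @ B @ [rh (m+1)]"
    by (rule eqv_append_left, unfold B_def, rule rho_commute_far) (use assms in auto)
  also have "\<dots> = map rh (rev [a..<b]) @ [rh (m+1)]" by (simp add: split)
  finally show ?thesis .
qed

lemma unmark_inv_rho_word: "map unmark_involution (inv_word (map rh L)) = map rh (rev L)"
  by (induction L) (auto simp: letter_inv_def)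

lemma rho_cycle_shift':
  assumes "1 \<le> a" "a \<le> m" "m + 2 \<le> b" "b \<le> n"
  shows "map rh [a..<b] @ [rh m] \<sim>\<sim> [rh (m+1)] @ map rh [a..<b]"
proof -
  have "m \<le> n - 1" "\<forall>k\<in>{a..<b}. k \<le> n - 1" using assms by auto
  with eqv_inverted[OF rho_cycle_shift[OF assms]] assms show ?thesis
    by (simp add: unmark_inv_rho_word letter_inv_def)
qed

lemma perm_of_rho_cycle: "p \<le> k \<Longrightarrow> perm_of_word (map rh (rev [p..<k])) p = k"
proof (induction k)
  case (Suc k)
  then show ?case by (cases "p = Suc k") (auto simp: transpose_def)
qed simp

lemma perm_of_rho_word_fixed:
  "(\<And>x. x \<in> set L \<Longrightarrow> x + 1 < k \<or> k < x) \<Longrightarrow> perm_of_word (map rh L) k = k"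
proof (induction L)
  case (Cons x L)
  have "x + 1 < k \<or> k < x" using Cons.prems by simp
  then have "transpose x (x+1) k = k" by (auto simp: transpose_def)
  with Cons show ?case by simp
qed simp

text \<open>Every \<open>\<rho>\<close>-word in \<open>\<rho>\<^sub>1, \<dots>, \<rho>\<^bsub>k-1\<^esub>\<close> equals a word in \<open>\<rho>\<^sub>1, \<dots>, \<rho>\<^bsub>k-2\<^esub>\<close> times one
  of the coset representatives \<open>\<rho>\<^bsub>k-1\<^esub>\<cdots>\<rho>\<^sub>p\<close> of \<open>S\<^bsub>k-1\<^esub>\<close> in \<open>S\<^sub>k\<close>.\<close>

lemma rho_word_coset_form:
  assumes k: "1 \<le> k" "k \<le> n" and L: "\<forall>x\<in>set L. 1 \<le> x \<and> x \<le> k - 1"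
  shows "\<exists>L0 p. (\<forall>x\<in>set L0. 1 \<le> x \<and> x \<le> k - 2) \<and> 1 \<le> p \<and> p \<le> k
    \<and> map rh L \<sim>\<sim> map rh L0 @ map rh (rev [p..<k])"
  using L
proof (induction L rule: rev_induct)
  case Nil
  show ?case by (rule exI[of _ "[]"], rule exI[of _ k]) (use k in \<open>auto simp: eqv_refl\<close>)
next
  case (snoc i L)
  then obtain L0 p where L0: "\<forall>x\<in>set L0. 1 \<le> x \<and> x \<le> k - 2" and p: "1 \<le> p" "p \<le> k"
    and eq: "map rh L \<sim>\<sim> map rh L0 @ map rh (rev [p..<k])" by auto
  have i: "1 \<le> i" "i \<le> k - 1" using snoc.prems by auto
  let ?c = "\<lambda>p. map rh (rev [p..<k])"
  have eq_i: "map rh (L @ [i]) \<sim>\<sim> map rh L0 @ ?c p @ [rh i]"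
    using eqv_append_right[OF eq, of "[rh i]"] by simp
  consider "Suc i = p" | "i = p" | "i + 2 \<le> p" | "p < i" by linarith
  then show ?case
  proof cases
    case 1
    then have "[i..<k] = i # [p..<k]" using i k by (simp add: upt_conv_Cons)
    then have "?c i = ?c p @ [rh i]" by simp
    then show ?thesis using eq_i L0 i by (intro exI[of _ L0] exI[of _ i]) auto
  next
    case 2
    note eq_i
    also have "map rh L0 @ ?c p @ [rh i] = map rh L0 @ ?c (Suc p) @ [rh i, rh i]"
      using 2 i k by (simp add: upt_conv_Cons)
    also have "\<dots> \<sim>\<sim> map rh L0 @ ?c (Suc p)"
      by (rule eqv_append_left, rule eqv_drop_right, rule rho_sq) (use i k in auto)
    finally show ?thesis using L0 i 2 by (intro exI[of _ L0] exI[of _ "Suc p"]) auto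
  next
    case 3
    note eq_i
    also have "map rh L0 @ ?c p @ [rh i] \<sim>\<sim> map rh L0 @ [rh i] @ ?c p"
      by (rule eqv_append_left, rule eqv_sym, rule rho_commute_far) (use i k 3 in auto)
    also have "\<dots> = map rh (L0 @ [i]) @ ?c p" by simp
    finally show ?thesis using L0 i p 3 by (intro exI[of _ "L0 @ [i]"] exI[of _ p]) auto
  next
    case 4
    note eq_i
    also have "map rh L0 @ ?c p @ [rh i] \<sim>\<sim> map rh L0 @ [rh (i - 1)] @ ?c p"
      using eqv_append_left[OF eqv_sym[OF rho_cycle_shift[of p "i - 1" k]]] i k p 4 by simp
    also have "\<dots> = map rh (L0 @ [i - 1]) @ ?c p" by simp
    finally show ?thesis using L0 i p 4 by (intro exI[of _ "L0 @ [i - 1]"] exI[of _ p]) auto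
  qed
qed

text \<open>Induction on \<open>k\<close>: the permutation of the normal form above sends \<open>p\<close> to \<open>k\<close>, so it is
  trivial only if the coset representative is empty.\<close>

lemma rho_word_trivial:
  "k \<le> n \<Longrightarrow> \<forall>x\<in>set L. 1 \<le> x \<and> x \<le> k - 1 \<Longrightarrow> perm_of_word (map rh L) = id \<Longrightarrow> map rh L \<sim>\<sim> []"
proof (induction k arbitrary: L)
  case 0
  then have "L = []" by (cases L) auto
  then show ?case by (simp add: eqv_refl)
next
  case (Suc k)
  obtain L0 p where L0: "\<forall>x\<in>set L0. 1 \<le> x \<and> x \<le> k - 1" and p: "1 \<le> p" "p \<le> Suc k"
      and eq: "map rh L \<sim>\<sim> map rh L0 @ map rh (rev [p..<Suc k])"
    using rho_word_coset_form[of "Suc k" L] Suc.prems by auto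
  have perm: "perm_of_word (map rh L) = perm_of_word (map rh L0) \<circ> perm_of_word (map rh (rev [p..<Suc k]))"
    using perm_of_word_eqv[OF eq] by (simp add: perm_of_word_append)
  have "perm_of_word (map rh L0) (Suc k) = Suc k"
    by (rule perm_of_rho_word_fixed) (use L0 in auto)
  then have "perm_of_word (map rh L) p = Suc k"
    using perm perm_of_rho_cycle[OF p(2)] by simp
  then have pk: "p = Suc k" using Suc.prems by simp
  then have "perm_of_word (map rh L0) = perm_of_word (map rh L)" using perm by simp
  then have "perm_of_word (map rh L0) = id" using Suc.prems(3) by (simp add: id_def)
  then have "map rh L0 \<sim>\<sim> []" using Suc.IH[of L0] Suc.prems L0 by simp
  then show ?case using eq pk tvb_eqv.trans by simp
qed

lemma lam_word_lt:
  "i < j \<Longrightarrow> lam_word i j = map rh (rev [Suc i..<j]) @ [rh i, sgi i] @ map rh [Suc i..<j]"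
  by (simp add: lam_word_def)

lemma lam_word_Suc_right: "i < j \<Longrightarrow> lam_word i (Suc j) = [rh j] @ lam_word i j @ [rh j]"
  by (simp add: lam_word_lt)

lemma valid_lam_word: "1 \<le> i \<Longrightarrow> i < j \<Longrightarrow> j \<le> n \<Longrightarrow> valid_word n (lam_word i j)"
  by (auto simp: lam_word_lt)

lemma perm_of_lam_word: "1 \<le> i \<Longrightarrow> i < j \<Longrightarrow> j \<le> n \<Longrightarrow> perm_of_word (lam_word i j) = id"
proof -
  assume ij: "1 \<le> i" "i < j" "j \<le> n"
  let ?L = "[Suc i..<j]"
  have "perm_of_word (map rh (rev ?L) @ map rh ?L) = perm_of_word []"
    by (rule perm_of_word_eqv, rule rho_word_cancel') (use ij in auto)
  moreover have "transpose i (Suc i) \<circ> (transpose i (Suc i) \<circ> f) = f" for f :: "nat \<Rightarrow> nat"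
    by (auto simp: fun_eq_iff transpose_def)
  ultimately show ?thesis using ij by (simp add: lam_word_lt perm_of_word_append)
qed

lemma sigma_inv_rho_comm:
  "1 \<le> i \<Longrightarrow> i \<le> n - 1 \<Longrightarrow> 1 \<le> m \<Longrightarrow> m \<le> n - 1 \<Longrightarrow> i + 2 \<le> m \<or> m + 2 \<le> i
   \<Longrightarrow> [rh m, sgi i] \<sim>\<sim> [sgi i, rh m]"
  using commute_letter_inv[OF sigma_rho_comm[of i m]] by (auto simp: letter_inv_def intro: eqv_sym)

lemma sigma_inv_gamma_comm:
  "1 \<le> i \<Longrightarrow> i \<le> n - 1 \<Longrightarrow> 1 \<le> j \<Longrightarrow> j \<le> n \<Longrightarrow> j \<noteq> i \<Longrightarrow> j \<noteq> i + 1
   \<Longrightarrow> [gm j, sgi i] \<sim>\<sim> [sgi i, gm j]"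
  using commute_letter_inv[OF eqv_sym[OF gamma_sigma_comm[of i j]]]
  by (auto simp: letter_inv_def intro: eqv_sym)

lemma gamma_lam_word_comm:
  assumes k: "1 \<le> k" "k \<le> n" "k \<noteq> i" "k \<noteq> j" and ij: "1 \<le> i" "i < j" "j \<le> n"
  shows "[gm k] @ lam_word i j \<sim>\<sim> lam_word i j @ [gm k]"
proof -
  define L where "L = [Suc i..<j]"
  define k' where "k' = perm_of_word (map rh L) k"
  have vL: "valid_word n (map rh L)" "valid_word n (map rh (rev L))" using ij by (auto simp: L_def)
  have inverse: "perm_of_word (map rh (rev L)) k' = k"
    using perm_of_word_eqv[OF rho_word_cancel'[OF vL(1)]]
    by (simp add: k'_def perm_of_word_append fun_eq_iff)
  have k': "1 \<le> k'" "k' \<le> n" using perm_of_word_range[OF vL(1) k(1,2)] by (auto simp: k'_def)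
  have "k' \<noteq> i"
  proof
    assume "k' = i"
    then have "k = perm_of_word (map rh (rev L)) i" using inverse by simp
    also have "\<dots> = i" by (rule perm_of_rho_word_fixed) (auto simp: L_def)
    finally show False using k by simp
  qed
  moreover have "k' \<noteq> i + 1"
  proof
    assume "k' = i + 1"
    then have "k = perm_of_word (map rh (rev L)) (Suc i)" using inverse by simp
    also have "\<dots> = j" unfolding L_def by (rule perm_of_rho_cycle) (use ij in simp)
    finally show False using k by simp
  qed
  ultimately have comm: "[gm k'] @ [rh i, sgi i] \<sim>\<sim> [rh i, sgi i] @ [gm k']"
    using k' ij by (intro commute_word) (auto intro: sigma_inv_gamma_comm gamma_rho_comm)
  have "[gm k] @ lam_word i j = ([gm k] @ map rh (rev L)) @ [rh i, sgi i] @ map rh L"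
    using ij by (simp add: lam_word_lt L_def)
  also have "\<dots> \<sim>\<sim> (map rh (rev L) @ [gm k']) @ [rh i, sgi i] @ map rh L"
    using eqv_append_right[OF gamma_rho_word[OF vL(2) k(1,2)]] by (simp add: k'_def)
  also have "\<dots> = map rh (rev L) @ ([gm k'] @ [rh i, sgi i]) @ map rh L" by simp
  also have "\<dots> \<sim>\<sim> map rh (rev L) @ ([rh i, sgi i] @ [gm k']) @ map rh L"
    by (rule eqv_ctx, rule comm)
  also have "\<dots> = (map rh (rev L) @ [rh i, sgi i]) @ [gm k'] @ map rh L" by simp
  also have "\<dots> \<sim>\<sim> (map rh (rev L) @ [rh i, sgi i]) @ map rh L @ [gm k]"
    using eqv_append_left[OF gamma_rho_word[OF vL(1) k'], of "map rh (rev L) @ [rh i, sgi i]"] inverse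
    by simp
  also have "\<dots> = lam_word i j @ [gm k]" using ij by (simp add: lam_word_lt L_def)
  finally show ?thesis .
qed

subsection \<open>Conjugating \<open>\<lambda>\<^sub>i\<^sub>j\<close> by \<open>\<rho>\<^sub>m\<close>\<close>

lemma rho_conj_involutive:
  assumes "1 \<le> m" "m \<le> n - 1" "[rh m] @ u @ [rh m] \<sim>\<sim> v"
  shows "[rh m] @ v @ [rh m] \<sim>\<sim> u"
proof -
  have "[rh m] @ v @ [rh m] \<sim>\<sim> [rh m] @ ([rh m] @ u @ [rh m]) @ [rh m]"
    by (rule eqv_ctx, rule eqv_sym, fact)
  also have "\<dots> = [rh m, rh m] @ u @ [rh m, rh m]" by simp
  also have "\<dots> \<sim>\<sim> [] @ u @ []" using assms by (intro eqv_append rho_sq eqv_refl)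
  finally show ?thesis by simp
qed

lemma rho_conj_lam_word_far:
  assumes m: "1 \<le> m" "m \<le> n - 1" and ij: "1 \<le> i" "i < j" "j \<le> n" and far: "m + 2 \<le> i \<or> j + 1 \<le> m"
  shows "[rh m] @ lam_word i j @ [rh m] \<sim>\<sim> lam_word i j"
proof -
  have "[rh m] @ lam_word i j \<sim>\<sim> lam_word i j @ [rh m]"
  proof (rule commute_word)
    fix y assume "y \<in> set (lam_word i j)"
    then consider "y = sgi i" | k where "y = rh k" "i \<le> k" "k < j"
      using ij by (auto simp: lam_word_lt)
    then show "[rh m, y] \<sim>\<sim> [y, rh m]"
      by cases (use m ij far in \<open>auto intro: sigma_inv_rho_comm rho_comm\<close>)
  qed
  then have "[rh m] @ lam_word i j @ [rh m] \<sim>\<sim> lam_word i j @ [rh m, rh m]"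
    using eqv_append_right[of _ _ "[rh m]"] by fastforce
  also have "\<dots> \<sim>\<sim> lam_word i j" by (rule eqv_drop_right, rule rho_sq[OF m])
  finally show ?thesis .
qed

lemma rho_conj_lam_word_inner:
  assumes m: "1 \<le> m" "m \<le> n - 1" and ij: "1 \<le> i" "i + 1 \<le> m" "m + 2 \<le> j" "j \<le> n"
  shows "[rh m] @ lam_word i j @ [rh m] \<sim>\<sim> lam_word i j"
proof -
  define P where "P = map rh (rev [Suc i..<j])"
  define Q where "Q = map rh [Suc i..<j]"
  have lam: "lam_word i j = P @ [rh i, sgi i] @ Q" using ij by (simp add: lam_word_lt P_def Q_def)
  have "[rh m] @ lam_word i j @ [rh m] = ([rh m] @ P) @ [rh i, sgi i] @ Q @ [rh m]" by (simp add: lam)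
  also have "\<dots> \<sim>\<sim> (P @ [rh (m+1)]) @ [rh i, sgi i] @ Q @ [rh m]"
    by (rule eqv_append_right, unfold P_def, rule rho_cycle_shift) (use ij in auto)
  also have "\<dots> = P @ ([rh (m+1)] @ [rh i, sgi i]) @ Q @ [rh m]" by simp
  also have "\<dots> \<sim>\<sim> P @ ([rh i, sgi i] @ [rh (m+1)]) @ Q @ [rh m]"
    by (rule eqv_ctx, rule commute_word) (use m ij in \<open>auto intro: sigma_inv_rho_comm rho_comm\<close>)
  also have "\<dots> = (P @ [rh i, sgi i]) @ [rh (m+1)] @ (Q @ [rh m])" by simp
  also have "\<dots> \<sim>\<sim> (P @ [rh i, sgi i]) @ [rh (m+1)] @ ([rh (m+1)] @ Q)"
    by (rule eqv_append_left, rule eqv_append_left, unfold Q_def, rule rho_cycle_shift')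
       (use ij in auto)
  also have "\<dots> = (P @ [rh i, sgi i]) @ [rh (m+1), rh (m+1)] @ Q" by simp
  also have "\<dots> \<sim>\<sim> (P @ [rh i, sgi i]) @ [] @ Q" by (rule eqv_ctx, rule rho_sq) (use ij m in auto)
  finally show ?thesis by (simp add: lam)
qed

lemma rho_rho_sigma_inv:
  assumes "1 \<le> i" "i \<le> n - 2"
  shows "[sgi i, rh (i+1), rh i] \<sim>\<sim> [rh (i+1), rh i, sgi (i+1)]"
proof -
  have "i \<le> n - 1" "i + 1 \<le> n - 1" using assms by auto
  with eqv_inverted[OF rho_rho_sigma[OF assms]] assms show ?thesis by (simp add: letter_inv_def)
qed

lemma sigma_inv_succ:
  assumes "1 \<le> i" "i \<le> n - 2"
  shows "[sgi (i+1)] \<sim>\<sim> [rh i, rh (i+1), sgi i, rh (i+1), rh i]"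
proof -
  have "[sgi (i+1)] \<sim>\<sim> [rh i, rh i] @ [sgi (i+1)]"
    by (rule eqv_sym, rule eqv_drop_left, rule rho_sq) (use assms in auto)
  also have "\<dots> = [rh i] @ [] @ [rh i, sgi (i+1)]" by simp
  also have "\<dots> \<sim>\<sim> [rh i] @ [rh (i+1), rh (i+1)] @ [rh i, sgi (i+1)]"
    by (rule eqv_ctx, rule eqv_sym, rule rho_sq) (use assms in auto)
  also have "\<dots> = [rh i, rh (i+1)] @ [rh (i+1), rh i, sgi (i+1)] @ []" by simp
  also have "\<dots> \<sim>\<sim> [rh i, rh (i+1)] @ [sgi i, rh (i+1), rh i] @ []"
    by (rule eqv_ctx, rule eqv_sym, rule rho_rho_sigma_inv) (use assms in auto)
  finally show ?thesis by simp
qed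

text \<open>This is \<open>\<rho>\<^sub>i \<lambda>\<^bsub>i,i+2\<^esub> \<rho>\<^sub>i = \<lambda>\<^bsub>i+1,i+2\<^esub>\<close>.\<close>

lemma rho_braid_sigma_inv:
  assumes "1 \<le> i" "i \<le> n - 2"
  shows "[rh i, rh (i+1), rh i, sgi i, rh (i+1), rh i] \<sim>\<sim> [rh (i+1), sgi (i+1)]"
proof -
  have "[rh (i+1), sgi (i+1)] = [rh (i+1)] @ [sgi (i+1)] @ []" by simp
  also have "\<dots> \<sim>\<sim> [rh (i+1)] @ [rh i, rh (i+1), sgi i, rh (i+1), rh i] @ []"
    by (rule eqv_ctx, rule sigma_inv_succ) (use assms in auto)
  also have "\<dots> = [rh (i+1), rh i, rh (i+1)] @ [sgi i, rh (i+1), rh i]" by simp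
  also have "\<dots> \<sim>\<sim> [rh i, rh (i+1), rh i] @ [sgi i, rh (i+1), rh i]"
    by (rule eqv_append_right, rule eqv_sym, rule rho_braid) (use assms in auto)
  finally show ?thesis by (simp add: eqv_sym)
qed

lemma rho_conj_lam_word_left:
  assumes ij: "1 \<le> i" "i + 2 \<le> j" "j \<le> n"
  shows "[rh i] @ lam_word i j @ [rh i] \<sim>\<sim> lam_word (i+1) j"
proof -
  define P where "P = map rh (rev [i+2..<j])"
  define Q where "Q = map rh [i+2..<j]"
  have lam: "lam_word i j = P @ [rh (i+1), rh i, sgi i, rh (i+1)] @ Q"
    using ij by (simp add: lam_word_lt P_def Q_def upt_conv_Cons)
  have "[rh i] @ lam_word i j @ [rh i] = ([rh i] @ P) @ [rh (i+1), rh i, sgi i, rh (i+1)] @ Q @ [rh i]"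
    by (simp add: lam)
  also have "\<dots> \<sim>\<sim> (P @ [rh i]) @ [rh (i+1), rh i, sgi i, rh (i+1)] @ Q @ [rh i]"
    by (rule eqv_append_right, unfold P_def, rule rho_commute_far) (use ij in auto)
  also have "\<dots> = (P @ [rh i, rh (i+1), rh i, sgi i, rh (i+1)]) @ (Q @ [rh i])" by simp
  also have "\<dots> \<sim>\<sim> (P @ [rh i, rh (i+1), rh i, sgi i, rh (i+1)]) @ ([rh i] @ Q)"
    by (rule eqv_append_left, rule eqv_sym, unfold Q_def, rule rho_commute_far) (use ij in auto)
  also have "\<dots> = P @ [rh i, rh (i+1), rh i, sgi i, rh (i+1), rh i] @ Q" by simp
  also have "\<dots> \<sim>\<sim> P @ [rh (i+1), sgi (i+1)] @ Q"
    by (rule eqv_ctx, rule rho_braid_sigma_inv) (use ij in auto)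
  also have "\<dots> = lam_word (i+1) j" using ij by (simp add: lam_word_lt P_def Q_def)
  finally show ?thesis .
qed

lemma rho_conj_lam_word:
  assumes m: "1 \<le> m" "m \<le> n - 1" and ij: "1 \<le> i" "i < j" "j \<le> n" and "(i, j) \<noteq> (m, m + 1)"
  shows "[rh m] @ lam_word i j @ [rh m]
    \<sim>\<sim> lam_word (transpose m (m+1) i) (transpose m (m+1) j)"
proof -
  consider "m + 2 \<le> i \<or> j + 1 \<le> m" | "m + 1 = i" | "m = i" "i + 2 \<le> j"
    | "i + 1 \<le> m" "m + 2 \<le> j" | "m + 1 = j" "i < m" | "m = j" | "i = m" "j = m + 1"
    using ij by linarith
  then show ?thesis
  proof cases
    case 1
    then show ?thesis using rho_conj_lam_word_far[OF m ij] ij by (auto simp: transpose_def)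
  next
    case 2
    then show ?thesis using rho_conj_involutive[OF m rho_conj_lam_word_left[of m j]] m ij
      by (simp add: transpose_def)
  next
    case 3
    then show ?thesis using rho_conj_lam_word_left[of m j] ij by (simp add: transpose_def)
  next
    case 4
    then show ?thesis using rho_conj_lam_word_inner[OF m] ij by (simp add: transpose_def)
  next
    case 5
    then have "[rh m] @ lam_word i m @ [rh m] \<sim>\<sim> lam_word i j"
      using lam_word_Suc_right[of i m] eqv_refl by simp
    then show ?thesis using rho_conj_involutive[OF m] 5 by (simp add: transpose_def)
  next
    case 6
    then show ?thesis using lam_word_Suc_right[OF ij(2)] eqv_refl ij by (simp add: transpose_def)
  next
    case 7
    then show ?thesis using assms(6) by simp
  qed
qed

lemma rho_sigma_inv_rho:
  assumes "1 \<le> i" "i \<le> n - 1"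
  shows "[rh i, sgi i, rh i] \<sim>\<sim> [gm (i+1), gm i, sgi i, gm i, gm (i+1)]"
proof -
  have "i \<le> n" "i + 1 \<le> n" using assms by auto
  with eqv_inverted[OF rho_sigma_rho[OF assms]] assms show ?thesis by (simp add: letter_inv_def)
qed

lemma rho_conj_lam_word_adjacent:
  assumes "1 \<le> i" "i \<le> n - 1"
  shows "[rh i] @ lam_word i (i+1) @ [rh i] \<sim>\<sim> [gm (i+1), gm i] @ lam_word i (i+1) @ [gm i, gm (i+1)]"
proof -
  have "[rh i] @ lam_word i (i+1) @ [rh i] = [rh i] @ [rh i, sgi i, rh i]" by (simp add: lam_word_def)
  also have "\<dots> \<sim>\<sim> [rh i] @ [gm (i+1), gm i, sgi i, gm i, gm (i+1)]"
    by (rule eqv_append_left, rule rho_sigma_inv_rho) (use assms in auto)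
  also have "\<dots> = [rh i, gm (i+1)] @ [gm i, sgi i, gm i, gm (i+1)]" by simp
  also have "\<dots> \<sim>\<sim> [gm i, rh i] @ [gm i, sgi i, gm i, gm (i+1)]"
    using eqv_append_right[OF eqv_sym[OF gamma_rho[of i i]]] assms by (simp add: transpose_def)
  also have "\<dots> = [gm i] @ [rh i, gm i] @ [sgi i, gm i, gm (i+1)]" by simp
  also have "\<dots> \<sim>\<sim> [gm i] @ [gm (i+1), rh i] @ [sgi i, gm i, gm (i+1)]"
    by (rule eqv_ctx, rule rho_gamma) (use assms in auto)
  also have "\<dots> = [gm i, gm (i+1)] @ [rh i, sgi i, gm i, gm (i+1)]" by simp
  also have "\<dots> \<sim>\<sim> [gm (i+1), gm i] @ [rh i, sgi i, gm i, gm (i+1)]"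
    by (rule eqv_append_right, rule gamma_comm) (use assms in auto)
  finally show ?thesis by (simp add: lam_word_def)
qed

interpretation TVB: group "TVB n"
  by (rule group_TVB)

lemma rho_in_carrier: "1 \<le> m \<Longrightarrow> m \<le> n - 1 \<Longrightarrow> rho n m \<in> carrier (TVB n)"
  by (simp add: rho_def tcls_in_carrier)

lemma gamma_in_carrier: "1 \<le> k \<Longrightarrow> k \<le> n \<Longrightarrow> gamma n k \<in> carrier (TVB n)"
  by (simp add: gamma_def tcls_in_carrier)

lemma rho_involution: "1 \<le> m \<Longrightarrow> m \<le> n - 1 \<Longrightarrow> rho n m \<otimes>\<^bsub>TVB n\<^esub> rho n m = \<one>\<^bsub>TVB n\<^esub>"
  by (simp add: rho_def tcls_mult TVB_one tcls_eq_iff rho_sq)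

lemma gamma_involution: "1 \<le> k \<Longrightarrow> k \<le> n \<Longrightarrow> gamma n k \<otimes>\<^bsub>TVB n\<^esub> gamma n k = \<one>\<^bsub>TVB n\<^esub>"
  by (simp add: gamma_def tcls_mult TVB_one tcls_eq_iff gamma_sq)

lemma inv_rho: "1 \<le> m \<Longrightarrow> m \<le> n - 1 \<Longrightarrow> inv\<^bsub>TVB n\<^esub> (rho n m) = rho n m"
  using rho_involution rho_in_carrier by (simp add: TVB.inv_equality)

lemma inv_gamma: "1 \<le> k \<Longrightarrow> k \<le> n \<Longrightarrow> inv\<^bsub>TVB n\<^esub> (gamma n k) = gamma n k"
  using gamma_involution gamma_in_carrier by (simp add: TVB.inv_equality)

lemma gamma_mult_comm:
  "1 \<le> k \<Longrightarrow> k \<le> n \<Longrightarrow> 1 \<le> l \<Longrightarrow> l \<le> n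
   \<Longrightarrow> gamma n k \<otimes>\<^bsub>TVB n\<^esub> gamma n l = gamma n l \<otimes>\<^bsub>TVB n\<^esub> gamma n k"
  by (simp add: gamma_def tcls_mult tcls_eq_iff gamma_comm)

lemma lambda_in_TVP: "1 \<le> i \<Longrightarrow> i < j \<Longrightarrow> j \<le> n \<Longrightarrow> lambda n i j \<in> TVP n"
  by (simp add: lambda_def tcls_in_TVP valid_lam_word perm_of_lam_word)

lemma gamma_in_TVP: "1 \<le> k \<Longrightarrow> k \<le> n \<Longrightarrow> gamma n k \<in> TVP n"
  by (simp add: gamma_def tcls_in_TVP)

lemma lambda_in_carrier: "1 \<le> i \<Longrightarrow> i < j \<Longrightarrow> j \<le> n \<Longrightarrow> lambda n i j \<in> carrier (TVB n)"
  by (simp add: lambda_def tcls_in_carrier valid_lam_word)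

lemma gamma_lambda_comm:
  "1 \<le> k \<Longrightarrow> k \<le> n \<Longrightarrow> k \<noteq> i \<Longrightarrow> k \<noteq> j \<Longrightarrow> 1 \<le> i \<Longrightarrow> i < j \<Longrightarrow> j \<le> n
   \<Longrightarrow> gamma n k \<otimes>\<^bsub>TVB n\<^esub> lambda n i j = lambda n i j \<otimes>\<^bsub>TVB n\<^esub> gamma n k"
  using gamma_lam_word_comm[of k i j] by (simp add: gamma_def lambda_def tcls_mult tcls_eq_iff)

lemma rho_conj_gamma:
  assumes "1 \<le> m" "m \<le> n - 1" "1 \<le> k" "k \<le> n"
  shows "rho n m \<otimes>\<^bsub>TVB n\<^esub> gamma n k \<otimes>\<^bsub>TVB n\<^esub> rho n m = gamma n (transpose m (m+1) k)"
proof -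
  have "[rh m] @ [gm k, rh m] \<sim>\<sim> [rh m] @ [rh m, gm (transpose m (m+1) k)]"
    by (rule eqv_append_left, rule gamma_rho) (use assms in auto)
  also have "\<dots> \<sim>\<sim> [gm (transpose m (m+1) k)]"
    using eqv_drop_left[OF rho_sq[OF assms(1,2)]] by simp
  finally show ?thesis by (simp add: rho_def gamma_def tcls_mult tcls_eq_iff)
qed

definition gamma_pair :: "nat \<Rightarrow> nat \<Rightarrow> tword set set" where
  "gamma_pair i j = {\<one>\<^bsub>TVB n\<^esub>, gamma n i, gamma n j, gamma n i \<otimes>\<^bsub>TVB n\<^esub> gamma n j}"

lemma tconj_lambda_one: "1 \<le> i \<Longrightarrow> i < j \<Longrightarrow> j \<le> n \<Longrightarrow> tconj n (lambda n i j) \<one>\<^bsub>TVB n\<^esub> = lambda n i j"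
  using lambda_in_carrier unfolding tconj_def by simp

lemma PL_gens_iff:
  "x \<in> PL_gens n \<longleftrightarrow> (\<exists>i j c. 1 \<le> i \<and> i < j \<and> j \<le> n \<and> c \<in> gamma_pair i j \<and> x = tconj n (lambda n i j) c)"
proof
  assume "x \<in> PL_gens n"
  then obtain i j where ij: "1 \<le> i" "i < j" "j \<le> n" and x: "x \<in> {lambda n i j,
      tconj n (lambda n i j) (gamma n i), tconj n (lambda n i j) (gamma n j),
      tconj n (lambda n i j) (gamma n i \<otimes>\<^bsub>TVB n\<^esub> gamma n j)}"
    unfolding PL_gens_def by auto
  then have "\<exists>c\<in>gamma_pair i j. x = tconj n (lambda n i j) c"
    using tconj_lambda_one[OF ij] unfolding gamma_pair_def by auto
  then show "\<exists>i j c. 1 \<le> i \<and> i < j \<and> j \<le> n \<and> c \<in> gamma_pair i j \<and> x = tconj n (lambda n i j) c"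
    using ij by blast
next
  assume "\<exists>i j c. 1 \<le> i \<and> i < j \<and> j \<le> n \<and> c \<in> gamma_pair i j \<and> x = tconj n (lambda n i j) c"
  then obtain i j c where ij: "1 \<le> i" "i < j" "j \<le> n" and c: "c \<in> gamma_pair i j"
    and x: "x = tconj n (lambda n i j) c" by blast
  have "x \<in> {lambda n i j, tconj n (lambda n i j) (gamma n i), tconj n (lambda n i j) (gamma n j),
      tconj n (lambda n i j) (gamma n i \<otimes>\<^bsub>TVB n\<^esub> gamma n j)}"
    using c x tconj_lambda_one[OF ij] by (auto simp: gamma_pair_def)
  also have "\<dots> \<subseteq> PL_gens n"
    unfolding PL_gens_def using ij by (intro subsetI UN_I[of i] UN_I[of j]) auto
  finally show "x \<in> PL_gens n" .
qed

lemma lambda_in_PL_gens: "1 \<le> i \<Longrightarrow> i < j \<Longrightarrow> j \<le> n \<Longrightarrow> lambda n i j \<in> PL_gens n"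
  unfolding PL_gens_def by (intro UN_I[of i] UN_I[of j]) auto

lemma gammas_subset_carrier: "{gamma n k | k. 1 \<le> k \<and> k \<le> n} \<subseteq> carrier (TVB n)"
  using gamma_in_carrier by blast

lemma subgroup_An: "subgroup (An n) (TVB n)"
  unfolding An_def by (rule TVB.generate_is_subgroup[OF gammas_subset_carrier])

lemma gamma_in_An: "1 \<le> k \<Longrightarrow> k \<le> n \<Longrightarrow> gamma n k \<in> An n"
  unfolding An_def by (rule generate.incl) blast

lemma gamma_pair_subset_An: "1 \<le> i \<Longrightarrow> i < j \<Longrightarrow> j \<le> n \<Longrightarrow> gamma_pair i j \<subseteq> An n"
  unfolding gamma_pair_def
  using gamma_in_An[of i] gamma_in_An[of j] subgroup.one_closed[OF subgroup_An] subgroup.m_closed[OF subgroup_An]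
  by auto

lemma gamma_pair_mult_gamma:
  assumes ij: "1 \<le> i" "i < j" "j \<le> n" and k: "k = i \<or> k = j" and c: "c \<in> gamma_pair i j"
  shows "c \<otimes>\<^bsub>TVB n\<^esub> gamma n k \<in> gamma_pair i j"
proof -
  let ?gi = "gamma n i" and ?gj = "gamma n j"
  have gi: "?gi \<in> carrier (TVB n)" and gj: "?gj \<in> carrier (TVB n)" using ij gamma_in_carrier by auto
  have ii: "?gi \<otimes>\<^bsub>TVB n\<^esub> ?gi = \<one>\<^bsub>TVB n\<^esub>" and jj: "?gj \<otimes>\<^bsub>TVB n\<^esub> ?gj = \<one>\<^bsub>TVB n\<^esub>"
    using ij gamma_involution by auto
  have ji: "?gj \<otimes>\<^bsub>TVB n\<^esub> ?gi = ?gi \<otimes>\<^bsub>TVB n\<^esub> ?gj" using ij gamma_mult_comm by auto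
  have iji: "?gi \<otimes>\<^bsub>TVB n\<^esub> ?gj \<otimes>\<^bsub>TVB n\<^esub> ?gi = ?gj"
    using gi gj by (simp add: TVB.m_assoc ji) (simp add: TVB.m_assoc[symmetric] ii gj)
  have ijj: "?gi \<otimes>\<^bsub>TVB n\<^esub> ?gj \<otimes>\<^bsub>TVB n\<^esub> ?gj = ?gi"
    using gi gj by (simp add: TVB.m_assoc jj)
  show ?thesis
    using k c gi gj ii jj ji iji ijj unfolding gamma_pair_def by auto
qed

lemma gamma_An_comm:
  assumes "1 \<le> k" "k \<le> n" "c \<in> An n"
  shows "gamma n k \<otimes>\<^bsub>TVB n\<^esub> c = c \<otimes>\<^bsub>TVB n\<^esub> gamma n k"
  using assms(3) unfolding An_def
proof induction
  case one
  show ?case using gamma_in_carrier[OF assms(1,2)] by simp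
next
  case (incl h)
  then show ?case using gamma_mult_comm assms(1,2) by auto
next
  case (inv h)
  then obtain l where l: "1 \<le> l" "l \<le> n" "h = gamma n l" by blast
  then show ?case using gamma_mult_comm assms(1,2) inv_gamma by auto
next
  case (eng c d)
  have cd: "c \<in> carrier (TVB n)" "d \<in> carrier (TVB n)"
    using eng.hyps TVB.generate_in_carrier[OF gammas_subset_carrier] by auto
  have g: "gamma n k \<in> carrier (TVB n)" using gamma_in_carrier[OF assms(1,2)] .
  have "gamma n k \<otimes>\<^bsub>TVB n\<^esub> (c \<otimes>\<^bsub>TVB n\<^esub> d) = c \<otimes>\<^bsub>TVB n\<^esub> gamma n k \<otimes>\<^bsub>TVB n\<^esub> d"
    using cd g eng.IH(1) by (simp add: TVB.m_assoc[symmetric])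
  also have "\<dots> = c \<otimes>\<^bsub>TVB n\<^esub> d \<otimes>\<^bsub>TVB n\<^esub> gamma n k"
    using cd g eng.IH(2) by (simp add: TVB.m_assoc)
  finally show ?case .
qed

lemma An_subset_TVP: "An n \<subseteq> TVP n"
  unfolding An_def using gamma_in_TVP by (intro TVB.generate_subgroup_incl subgroup_TVP) auto

lemma PL_gens_subset_TVP: "PL_gens n \<subseteq> TVP n"
proof
  fix x assume "x \<in> PL_gens n"
  then obtain i j c where ij: "1 \<le> i" "i < j" "j \<le> n" and c: "c \<in> gamma_pair i j"
    and x: "x = inv\<^bsub>TVB n\<^esub> c \<otimes>\<^bsub>TVB n\<^esub> lambda n i j \<otimes>\<^bsub>TVB n\<^esub> c"
    by (auto simp: PL_gens_iff tconj_def)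
  have "c \<in> TVP n" using c gamma_pair_subset_An[OF ij] An_subset_TVP by blast
  then show "x \<in> TVP n" using x lambda_in_TVP[OF ij] subgroup_TVP
    by (simp add: subgroup.m_closed subgroup.m_inv_closed)
qed

abbreviation PL where "PL \<equiv> generate (TVB n) (PL_gens n)"

lemma PL_gens_subset_carrier: "PL_gens n \<subseteq> carrier (TVB n)"
  using PL_gens_subset_TVP subgroup.subset[OF subgroup_TVP] by blast

lemma subgroup_PL: "subgroup PL (TVB n)"
  by (rule TVB.generate_is_subgroup[OF PL_gens_subset_carrier])

lemma gamma_conj_PL_gens:
  assumes k: "1 \<le> k" "k \<le> n" and h: "h \<in> PL_gens n"
  shows "gamma n k \<otimes>\<^bsub>TVB n\<^esub> h \<otimes>\<^bsub>TVB n\<^esub> gamma n k \<in> PL_gens n"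
proof -
  obtain i j c where ij: "1 \<le> i" "i < j" "j \<le> n" and c: "c \<in> gamma_pair i j"
    and hc: "h = inv\<^bsub>TVB n\<^esub> c \<otimes>\<^bsub>TVB n\<^esub> lambda n i j \<otimes>\<^bsub>TVB n\<^esub> c"
    using h by (auto simp: PL_gens_iff tconj_def)
  let ?g = "gamma n k" and ?l = "lambda n i j"
  have cA: "c \<in> An n" using c gamma_pair_subset_An[OF ij] by blast
  have carr: "c \<in> carrier (TVB n)" "?g \<in> carrier (TVB n)" "?l \<in> carrier (TVB n)"
    using cA subgroup.mem_carrier[OF subgroup_An] gamma_in_carrier[OF k] lambda_in_carrier[OF ij] by auto
  have conj: "?g \<otimes>\<^bsub>TVB n\<^esub> h \<otimes>\<^bsub>TVB n\<^esub> ?g = tconj n ?l (c \<otimes>\<^bsub>TVB n\<^esub> ?g)"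
    using carr hc inv_gamma[OF k] by (simp add: tconj_def TVB.inv_mult_group TVB.m_assoc)
  show ?thesis
  proof (cases "k = i \<or> k = j")
    case True
    then show ?thesis using conj gamma_pair_mult_gamma[OF ij True c] ij by (auto simp: PL_gens_iff)
  next
    case False
    have gl: "?g \<otimes>\<^bsub>TVB n\<^esub> ?l \<otimes>\<^bsub>TVB n\<^esub> ?g = ?l"
      using gamma_lambda_comm[of k i j] False k ij carr gamma_involution[OF k]
      by (simp add: TVB.m_assoc)
    have "tconj n ?l (c \<otimes>\<^bsub>TVB n\<^esub> ?g) = tconj n ?l (?g \<otimes>\<^bsub>TVB n\<^esub> c)"
      using gamma_An_comm[OF k cA] by simp
    also have "\<dots> = inv\<^bsub>TVB n\<^esub> c \<otimes>\<^bsub>TVB n\<^esub> (?g \<otimes>\<^bsub>TVB n\<^esub> ?l \<otimes>\<^bsub>TVB n\<^esub> ?g) \<otimes>\<^bsub>TVB n\<^esub> c"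
      using carr inv_gamma[OF k] by (simp add: tconj_def TVB.inv_mult_group TVB.m_assoc)
    finally have "tconj n ?l (c \<otimes>\<^bsub>TVB n\<^esub> ?g) = tconj n ?l c"
      using gl by (simp add: tconj_def)
    then show ?thesis using conj h hc by (simp add: tconj_def)
  qed
qed

lemma gamma_conj_PL:
  assumes k: "1 \<le> k" "k \<le> n" and x: "x \<in> PL"
  shows "gamma n k \<otimes>\<^bsub>TVB n\<^esub> x \<otimes>\<^bsub>TVB n\<^esub> gamma n k \<in> PL"
  using TVB.conj_generate_closed[OF gamma_in_carrier[OF k] PL_gens_subset_carrier subgroup_PL _ x]
    gamma_conj_PL_gens[OF k] inv_gamma[OF k] by (simp add: generate.incl)

lemma An_conj_PL:
  assumes c: "c \<in> An n" and x: "x \<in> PL"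
  shows "inv\<^bsub>TVB n\<^esub> c \<otimes>\<^bsub>TVB n\<^esub> x \<otimes>\<^bsub>TVB n\<^esub> c \<in> PL"
proof -
  have "\<forall>h\<in>PL. inv\<^bsub>TVB n\<^esub> c \<otimes>\<^bsub>TVB n\<^esub> h \<otimes>\<^bsub>TVB n\<^esub> c \<in> PL"
  proof (rule TVB.generate_conj_closed[OF gammas_subset_carrier subgroup_PL])
    fix t h assume "t \<in> {gamma n k | k. 1 \<le> k \<and> k \<le> n}" "h \<in> PL"
    then show "inv\<^bsub>TVB n\<^esub> t \<otimes>\<^bsub>TVB n\<^esub> h \<otimes>\<^bsub>TVB n\<^esub> t \<in> PL \<and> t \<otimes>\<^bsub>TVB n\<^esub> h \<otimes>\<^bsub>TVB n\<^esub> inv\<^bsub>TVB n\<^esub> t \<in> PL"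
      using gamma_conj_PL inv_gamma by auto
  qed (use c in \<open>simp add: An_def\<close>)
  then show ?thesis using x by blast
qed

lemma rho_conj_An:
  assumes m: "1 \<le> m" "m \<le> n - 1" and c: "c \<in> An n"
  shows "rho n m \<otimes>\<^bsub>TVB n\<^esub> c \<otimes>\<^bsub>TVB n\<^esub> rho n m \<in> An n"
proof -
  have "rho n m \<otimes>\<^bsub>TVB n\<^esub> gamma n k \<otimes>\<^bsub>TVB n\<^esub> rho n m \<in> An n" if "1 \<le> k" "k \<le> n" for k
    using rho_conj_gamma[OF m that] gamma_in_An transpose_in_range[OF m that] by simp
  then show ?thesis
    using TVB.conj_generate_closed[OF rho_in_carrier[OF m] gammas_subset_carrier subgroup_An, of c]
      c inv_rho[OF m] unfolding An_def by auto
qed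

lemma rho_conj_lambda:
  assumes m: "1 \<le> m" "m \<le> n - 1" and ij: "1 \<le> i" "i < j" "j \<le> n"
  shows "rho n m \<otimes>\<^bsub>TVB n\<^esub> lambda n i j \<otimes>\<^bsub>TVB n\<^esub> rho n m \<in> PL_gens n"
proof (cases "(i, j) = (m, m + 1)")
  case True
  have gi: "gamma n i \<in> carrier (TVB n)" and gj: "gamma n j \<in> carrier (TVB n)"
    using ij gamma_in_carrier by auto
  have "tconj n (lambda n i j) (gamma n i \<otimes>\<^bsub>TVB n\<^esub> gamma n j)
      = gamma n j \<otimes>\<^bsub>TVB n\<^esub> gamma n i \<otimes>\<^bsub>TVB n\<^esub> lambda n i j \<otimes>\<^bsub>TVB n\<^esub> (gamma n i \<otimes>\<^bsub>TVB n\<^esub> gamma n j)"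
    using gi gj ij inv_gamma by (simp add: tconj_def TVB.inv_mult_group)
  also have "\<dots> = tcls n ([gm j, gm i] @ lam_word i j @ [gm i, gm j])"
    by (simp add: gamma_def lambda_def tcls_mult)
  also have "\<dots> = rho n m \<otimes>\<^bsub>TVB n\<^esub> lambda n i j \<otimes>\<^bsub>TVB n\<^esub> rho n m"
    using eqv_sym[OF rho_conj_lam_word_adjacent[OF m]] True
    by (simp add: rho_def lambda_def tcls_mult tcls_eq_iff)
  finally have conj: "rho n m \<otimes>\<^bsub>TVB n\<^esub> lambda n i j \<otimes>\<^bsub>TVB n\<^esub> rho n m
      = tconj n (lambda n i j) (gamma n i \<otimes>\<^bsub>TVB n\<^esub> gamma n j)" by simp
  show ?thesis unfolding PL_gens_iff conj
    by (rule exI[of _ i], rule exI[of _ j], rule exI[of _ "gamma n i \<otimes>\<^bsub>TVB n\<^esub> gamma n j"])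
       (use ij in \<open>simp add: gamma_pair_def\<close>)
next
  case False
  let ?t = "transpose m (m+1)"
  have "?t i < ?t j" using False ij by (auto simp: transpose_def)
  moreover have "1 \<le> ?t i" "?t j \<le> n" using transpose_in_range[OF m] ij by auto
  moreover have "rho n m \<otimes>\<^bsub>TVB n\<^esub> lambda n i j \<otimes>\<^bsub>TVB n\<^esub> rho n m = lambda n (?t i) (?t j)"
    using rho_conj_lam_word[OF m ij False] by (simp add: rho_def lambda_def tcls_mult tcls_eq_iff)
  ultimately show ?thesis using lambda_in_PL_gens by simp
qed

lemma rho_conj_PL:
  assumes m: "1 \<le> m" "m \<le> n - 1" and x: "x \<in> PL"
  shows "rho n m \<otimes>\<^bsub>TVB n\<^esub> x \<otimes>\<^bsub>TVB n\<^esub> rho n m \<in> PL"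
proof -
  let ?r = "rho n m"
  have "?r \<otimes>\<^bsub>TVB n\<^esub> h \<otimes>\<^bsub>TVB n\<^esub> ?r \<in> PL" if h: "h \<in> PL_gens n" for h
  proof -
    obtain i j c where ij: "1 \<le> i" "i < j" "j \<le> n" and c: "c \<in> gamma_pair i j"
      and hc: "h = inv\<^bsub>TVB n\<^esub> c \<otimes>\<^bsub>TVB n\<^esub> lambda n i j \<otimes>\<^bsub>TVB n\<^esub> c"
      using h by (auto simp: PL_gens_iff tconj_def)
    let ?c = "?r \<otimes>\<^bsub>TVB n\<^esub> c \<otimes>\<^bsub>TVB n\<^esub> ?r" and ?l = "?r \<otimes>\<^bsub>TVB n\<^esub> lambda n i j \<otimes>\<^bsub>TVB n\<^esub> ?r"
    have cA: "c \<in> An n" using c gamma_pair_subset_An[OF ij] by blast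
    have carr: "c \<in> carrier (TVB n)" "?r \<in> carrier (TVB n)" "lambda n i j \<in> carrier (TVB n)"
      using subgroup.mem_carrier[OF subgroup_An cA] rho_in_carrier[OF m] lambda_in_carrier[OF ij] by auto
    have "?r \<otimes>\<^bsub>TVB n\<^esub> h \<otimes>\<^bsub>TVB n\<^esub> ?r = inv\<^bsub>TVB n\<^esub> ?c \<otimes>\<^bsub>TVB n\<^esub> ?l \<otimes>\<^bsub>TVB n\<^esub> ?c"
      using carr hc inv_rho[OF m] rho_involution[OF m]
      by (simp add: TVB.inv_mult_group TVB.m_assoc) (simp add: TVB.m_assoc[symmetric])
    moreover have "?l \<in> PL" using rho_conj_lambda[OF m ij] by (rule generate.incl)
    ultimately show ?thesis using An_conj_PL[OF rho_conj_An[OF m cA]] by simp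
  qed
  then show ?thesis
    using TVB.conj_generate_closed[OF rho_in_carrier[OF m] PL_gens_subset_carrier subgroup_PL _ x]
      inv_rho[OF m] by simp
qed

section \<open>Every element of \<open>TVB n\<close> lies in \<open>PL \<cdot> A\<^sub>n \<cdot> \<langle>\<rho>\<^sub>1, \<dots>, \<rho>\<^bsub>n-1\<^esub>\<rangle>\<close>\<close>

definition PL_An_Rho :: "tword set set" where
  "PL_An_Rho = {g \<otimes>\<^bsub>TVB n\<^esub> c \<otimes>\<^bsub>TVB n\<^esub> tcls n (map rh L) | g c L.
     g \<in> PL \<and> c \<in> An n \<and> valid_word n (map rh L)}"

lemma PL_An_RhoE:
  assumes "y \<in> PL_An_Rho"
  obtains g c L where "g \<in> PL" "c \<in> An n" "valid_word n (map rh L)"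
    "y = g \<otimes>\<^bsub>TVB n\<^esub> c \<otimes>\<^bsub>TVB n\<^esub> tcls n (map rh L)"
    "g \<in> carrier (TVB n)" "c \<in> carrier (TVB n)" "tcls n (map rh L) \<in> carrier (TVB n)"
  using assms subgroup.mem_carrier[OF subgroup_PL] subgroup.mem_carrier[OF subgroup_An] tcls_in_carrier
  unfolding PL_An_Rho_def by blast

lemma PL_An_RhoI:
  "g \<in> PL \<Longrightarrow> c \<in> An n \<Longrightarrow> valid_word n (map rh L)
   \<Longrightarrow> g \<otimes>\<^bsub>TVB n\<^esub> c \<otimes>\<^bsub>TVB n\<^esub> tcls n (map rh L) \<in> PL_An_Rho"
  unfolding PL_An_Rho_def by blast

lemma PL_An_Rho_carrier: "y \<in> PL_An_Rho \<Longrightarrow> y \<in> carrier (TVB n)"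
  by (erule PL_An_RhoE) simp

lemma PL_mult_PL_An_Rho:
  assumes l: "l \<in> PL" and "y \<in> PL_An_Rho"
  shows "l \<otimes>\<^bsub>TVB n\<^esub> y \<in> PL_An_Rho"
proof -
  obtain g c L where y: "g \<in> PL" "c \<in> An n" "valid_word n (map rh L)"
    "y = g \<otimes>\<^bsub>TVB n\<^esub> c \<otimes>\<^bsub>TVB n\<^esub> tcls n (map rh L)"
    and carr: "g \<in> carrier (TVB n)" "c \<in> carrier (TVB n)" "tcls n (map rh L) \<in> carrier (TVB n)"
    using assms(2) by (rule PL_An_RhoE)
  have "l \<otimes>\<^bsub>TVB n\<^esub> y = (l \<otimes>\<^bsub>TVB n\<^esub> g) \<otimes>\<^bsub>TVB n\<^esub> c \<otimes>\<^bsub>TVB n\<^esub> tcls n (map rh L)"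
    using y carr subgroup.mem_carrier[OF subgroup_PL l] by (simp add: TVB.m_assoc)
  then show ?thesis using y subgroup.m_closed[OF subgroup_PL l] by (simp add: PL_An_RhoI)
qed

lemma gamma_mult_PL_An_Rho:
  assumes k: "1 \<le> k" "k \<le> n" and "y \<in> PL_An_Rho"
  shows "gamma n k \<otimes>\<^bsub>TVB n\<^esub> y \<in> PL_An_Rho"
proof -
  let ?g = "gamma n k"
  obtain g c L where y: "g \<in> PL" "c \<in> An n" "valid_word n (map rh L)"
    "y = g \<otimes>\<^bsub>TVB n\<^esub> c \<otimes>\<^bsub>TVB n\<^esub> tcls n (map rh L)"
    and carr: "g \<in> carrier (TVB n)" "c \<in> carrier (TVB n)" "tcls n (map rh L) \<in> carrier (TVB n)"
    using assms(3) by (rule PL_An_RhoE)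
  have g: "?g \<in> carrier (TVB n)" using gamma_in_carrier[OF k] .
  have "?g \<otimes>\<^bsub>TVB n\<^esub> y = (?g \<otimes>\<^bsub>TVB n\<^esub> g \<otimes>\<^bsub>TVB n\<^esub> ?g) \<otimes>\<^bsub>TVB n\<^esub> (?g \<otimes>\<^bsub>TVB n\<^esub> c) \<otimes>\<^bsub>TVB n\<^esub> tcls n (map rh L)"
    using y carr g gamma_involution[OF k] by (simp add: TVB.m_assoc) (simp add: TVB.m_assoc[symmetric])
  moreover have "?g \<otimes>\<^bsub>TVB n\<^esub> c \<in> An n" using subgroup.m_closed[OF subgroup_An gamma_in_An[OF k] y(2)] .
  ultimately show ?thesis using y gamma_conj_PL[OF k y(1)] by (simp add: PL_An_RhoI)
qed

lemma rho_mult_PL_An_Rho: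
  assumes m: "1 \<le> m" "m \<le> n - 1" and "y \<in> PL_An_Rho"
  shows "rho n m \<otimes>\<^bsub>TVB n\<^esub> y \<in> PL_An_Rho"
proof -
  let ?r = "rho n m"
  obtain g c L where y: "g \<in> PL" "c \<in> An n" "valid_word n (map rh L)"
    "y = g \<otimes>\<^bsub>TVB n\<^esub> c \<otimes>\<^bsub>TVB n\<^esub> tcls n (map rh L)"
    and carr: "g \<in> carrier (TVB n)" "c \<in> carrier (TVB n)" "tcls n (map rh L) \<in> carrier (TVB n)"
    using assms(3) by (rule PL_An_RhoE)
  have r: "?r \<in> carrier (TVB n)" using rho_in_carrier[OF m] .
  have "?r \<otimes>\<^bsub>TVB n\<^esub> y = (?r \<otimes>\<^bsub>TVB n\<^esub> g \<otimes>\<^bsub>TVB n\<^esub> ?r) \<otimes>\<^bsub>TVB n\<^esub> (?r \<otimes>\<^bsub>TVB n\<^esub> c \<otimes>\<^bsub>TVB n\<^esub> ?r)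
      \<otimes>\<^bsub>TVB n\<^esub> (?r \<otimes>\<^bsub>TVB n\<^esub> tcls n (map rh L))"
    using y carr r rho_involution[OF m] by (simp add: TVB.m_assoc) (simp add: TVB.m_assoc[symmetric])
  moreover have "?r \<otimes>\<^bsub>TVB n\<^esub> tcls n (map rh L) = tcls n (map rh (m # L))"
    by (simp add: rho_def tcls_mult)
  moreover have "valid_word n (map rh (m # L))" using y(3) m by simp
  ultimately show ?thesis
    using PL_An_RhoI[OF rho_conj_PL[OF m y(1)] rho_conj_An[OF m y(2)], of "m # L"] by simp
qed

lemma lambda_adjacent_in_PL: "1 \<le> m \<Longrightarrow> m \<le> n - 1 \<Longrightarrow> lambda n m (Suc m) \<in> PL"
  by (rule generate.incl, rule lambda_in_PL_gens) auto

lemma sigma_eq: "1 \<le> m \<Longrightarrow> m \<le> n - 1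
  \<Longrightarrow> tcls n [sg m] = inv\<^bsub>TVB n\<^esub> (lambda n m (Suc m)) \<otimes>\<^bsub>TVB n\<^esub> rho n m"
  using eqv_sym[OF eqv_drop_right[OF letter_cancel[of "(R m, True)"], of "[sg m]"]]
  by (simp add: lambda_def rho_def lam_word_def inv_tcls tcls_mult tcls_eq_iff letter_inv_def)

lemma sigma_inv_eq: "1 \<le> m \<Longrightarrow> m \<le> n - 1
  \<Longrightarrow> tcls n [sgi m] = rho n m \<otimes>\<^bsub>TVB n\<^esub> lambda n m (Suc m)"
  using eqv_sym[OF eqv_drop_left[OF rho_sq, of m "[sgi m]"]]
  by (simp add: lambda_def rho_def lam_word_def tcls_mult tcls_eq_iff)

lemma letter_mult_PL_An_Rho:
  assumes a: "valid_gen n (fst a)" and y: "y \<in> PL_An_Rho"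
  shows "tcls n [a] \<otimes>\<^bsub>TVB n\<^esub> y \<in> PL_An_Rho"
proof -
  obtain x b where ab: "a = (x, b)" by (cases a)
  have yc: "y \<in> carrier (TVB n)" using PL_An_Rho_carrier[OF y] .
  show ?thesis
  proof (cases x)
    case (G k)
    then have k: "1 \<le> k" "k \<le> n" using a ab by auto
    have "tcls n [a] = gamma n k"
      using ab G gamma_inv_letter[OF k] by (cases b) (auto simp: gamma_def tcls_eq_iff eqv_refl)
    then show ?thesis using gamma_mult_PL_An_Rho[OF k y] by simp
  next
    case (R m)
    then have m: "1 \<le> m" "m \<le> n - 1" using a ab by auto
    have "tcls n [a] = rho n m"
      using ab R rho_inv_letter[OF m] by (cases b) (auto simp: rho_def tcls_eq_iff eqv_refl)
    then show ?thesis using rho_mult_PL_An_Rho[OF m y] by simp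
  next
    case (S m)
    then have m: "1 \<le> m" "m \<le> n - 1" using a ab by auto
    let ?l = "lambda n m (Suc m)"
    have l: "?l \<in> PL" "?l \<in> carrier (TVB n)"
      using lambda_adjacent_in_PL[OF m] lambda_in_carrier[of m "Suc m"] m by auto
    show ?thesis
    proof (cases b)
      case False
      then have "tcls n [a] \<otimes>\<^bsub>TVB n\<^esub> y = inv\<^bsub>TVB n\<^esub> ?l \<otimes>\<^bsub>TVB n\<^esub> (rho n m \<otimes>\<^bsub>TVB n\<^esub> y)"
        using ab S sigma_eq[OF m] l(2) rho_in_carrier[OF m] yc by (simp add: TVB.m_assoc)
      then show ?thesis
        using PL_mult_PL_An_Rho[OF subgroup.m_inv_closed[OF subgroup_PL l(1)] rho_mult_PL_An_Rho[OF m y]]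
        by simp
    next
      case True
      then have "tcls n [a] \<otimes>\<^bsub>TVB n\<^esub> y = rho n m \<otimes>\<^bsub>TVB n\<^esub> (?l \<otimes>\<^bsub>TVB n\<^esub> y)"
        using ab S sigma_inv_eq[OF m] l(2) rho_in_carrier[OF m] yc by (simp add: TVB.m_assoc)
      then show ?thesis using rho_mult_PL_An_Rho[OF m PL_mult_PL_An_Rho[OF l(1) y]] by simp
    qed
  qed
qed

lemma tcls_in_PL_An_Rho: "valid_word n w \<Longrightarrow> tcls n w \<in> PL_An_Rho"
proof (induction w)
  case Nil
  have "tcls n [] = \<one>\<^bsub>TVB n\<^esub> \<otimes>\<^bsub>TVB n\<^esub> \<one>\<^bsub>TVB n\<^esub> \<otimes>\<^bsub>TVB n\<^esub> tcls n (map rh [])"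
    by (simp add: TVB_one tcls_mult)
  then show ?case
    using PL_An_RhoI[OF generate.one subgroup.one_closed[OF subgroup_An], of "[]"] by simp
next
  case (Cons a w)
  then show ?case using letter_mult_PL_An_Rho[of a "tcls n w"] by (simp add: tcls_mult)
qed

lemma TVP_decomposition:
  assumes "x \<in> TVP n"
  shows "\<exists>g\<in>PL. \<exists>c\<in>An n. x = g \<otimes>\<^bsub>TVB n\<^esub> c"
proof -
  obtain w where x: "x = tcls n w" and w: "valid_word n w" "perm_of_word w = id"
    using assms TVP_iff by blast
  obtain g c L where g: "g \<in> PL" and c: "c \<in> An n" and L: "valid_word n (map rh L)"
    and xgc: "x = g \<otimes>\<^bsub>TVB n\<^esub> c \<otimes>\<^bsub>TVB n\<^esub> tcls n (map rh L)"
    and carr: "g \<in> carrier (TVB n)" "c \<in> carrier (TVB n)"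
    using tcls_in_PL_An_Rho[OF w(1)] x by (auto elim: PL_An_RhoE)
  have "g \<in> TVP n" "c \<in> TVP n"
    using g c TVB.generate_subgroup_incl[OF PL_gens_subset_TVP subgroup_TVP] An_subset_TVP by auto
  then obtain u v where "g = tcls n u" "perm_of_word u = id" "c = tcls n v" "perm_of_word v = id"
    by (auto simp: TVP_iff)
  then have "perm_of_word w = perm_of_word (map rh L)"
    using perm_of_word_eqv xgc x by (simp add: tcls_mult tcls_eq_iff perm_of_word_append)
  then have "map rh L \<sim>\<sim> []" using rho_word_trivial[of n L] L w(2) by simp
  then have "tcls n (map rh L) = \<one>\<^bsub>TVB n\<^esub>" by (simp add: tcls_eq_iff TVB_one)
  then show ?thesis using xgc g c carr by auto
qed

end

theorem mainTheorem6:
  fixes n :: nat and \<psi> :: "tword set \<Rightarrow> tword set"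
  assumes "n \<ge> 2"
    and "is_psiP n \<psi>"
  shows "generate (TVB n) (PL_gens n) = kernel ((TVB n)\<lparr>carrier := TVP n\<rparr>) ((TVB n)\<lparr>carrier := An n\<rparr>) \<psi>"
  unfolding An_def
proof (rule group.kernel_retraction_eq_generate[OF group_TVB subgroup_TVP])
  show "{gamma n k | k. 1 \<le> k \<and> k \<le> n} \<subseteq> TVP n" using gamma_in_TVP by blast
  show "\<psi> \<in> hom ((TVB n)\<lparr>carrier := TVP n\<rparr>) ((TVB n)\<lparr>carrier := generate (TVB n) {gamma n k | k. 1 \<le> k \<and> k \<le> n}\<rparr>)"
    using assms(2) by (simp add: is_psiP_def An_def)
  show "\<psi> t = t" if "t \<in> {gamma n k | k. 1 \<le> k \<and> k \<le> n}" for t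
    using that assms(2) by (auto simp: is_psiP_def)
  show "\<exists>c\<in>generate (TVB n) {gamma n k | k. 1 \<le> k \<and> k \<le> n}. \<exists>s0\<in>TVP n.
      \<psi> s0 = \<one>\<^bsub>TVB n\<^esub> \<and> s = inv\<^bsub>TVB n\<^esub> c \<otimes>\<^bsub>TVB n\<^esub> s0 \<otimes>\<^bsub>TVB n\<^esub> c" if gen: "s \<in> PL_gens n" for s
  proof -
    obtain i j c where ij: "1 \<le> i" "i < j" "j \<le> n" and c: "c \<in> gamma_pair n i j"
      and s: "s = tconj n (lambda n i j) c"
      using gen by (auto simp: PL_gens_iff)
    have "\<psi> (lambda n i j) = \<one>\<^bsub>TVB n\<^esub>" using assms(2) ij by (simp add: is_psiP_def)
    then show ?thesis
      using gamma_pair_subset_An[OF ij] c lambda_in_TVP[OF ij] s unfolding An_def tconj_def by blast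
  qed
  show "\<exists>k\<in>generate (TVB n) (PL_gens n). \<exists>c\<in>generate (TVB n) {gamma n k | k. 1 \<le> k \<and> k \<le> n}.
      x = k \<otimes>\<^bsub>TVB n\<^esub> c" if "x \<in> TVP n" for x
    using TVP_decomposition[OF that] by (simp add: An_def)
qed

end
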